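(* Let $\mathbb X,\mathbb Y$ be Euclidean spaces, $g\colon\mathbb X\to\mathbb Y$ twice continuously differentiable, $D\subset\mathbb Y$ closed, $\Phi(x):=g(x)-D$, $(\bar x,0)\in\operatorname{gph}\Phi$ and $u\in\mathbb S_{\mathbb X}$. Then $\Phi$ is strongly asymptotically regular at $(\bar x,0)$ in direction $u$ if FOSCMS$(u)$ holds, or if $\mathbb Y=\mathbb R^m$, $D$ is locally polyhedral around $g(\bar x)$, and SOSCMS$(u)$ holds.
   Context: FOSCMS$(u)$: for all $y^*$, [$\nabla g(\bar x)^*y^*=0$, $y^*\in\mathcal N_D(g(\bar x);\nabla g(\bar x)u)$] implies $y^*=0$. SOSCMS$(u)$: for all $y^*$, [$\nabla g(\bar x)^*y^*=0$, $\nabla^2\langle y^*,g\rangle(\bar x)[u,u]\ge0$, $y^*\in\mathcal N_D(g(\bar x);\nabla g(\bar x)u)$] implies $y^*=0$, where $\nabla^2\langle y^*,g\rangle(\bar x)$ is the Hessian of $x\mapsto\langle y^*,g(x)\rangle$. $\mathcal N_Q(z;w)$ is the directional limiting normal cone: all $\eta$ with $w_k\to w$, $t_k\downarrow0$, $\eta_k\to\eta$, $\eta_k\in\widehat{\mathcal N}_Q(z+t_kw_k)$ ($\widehat{\mathcal N}$ regular normal cone). Strong asymptotic regularity in direction $u$ at $(\bar x,0)$: for all $(x_k,y_k)\in\operatorname{gph}\Phi$, $x_k^*$, $\lambda_k$, $x^*$, $y^*$ with $x_k\notin\Phi^{-1}(0)$, $y_k\ne0$, $x_k^*\in\widehat D^*\Phi(x_k,y_k)(\lambda_k)$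 (i.e. $(x_k^*,-\lambda_k)\in\widehat{\mathcal N}_{\operatorname{gph}\Phi}(x_k,y_k)$) and $x_k\to\bar x$, $y_k\to0$, $x_k^*\to x^*$, $\frac{x_k-\bar x}{\|x_k-\bar x\|}\to u$, $\frac{y_k}{\|x_k-\bar x\|}\to0$, $\frac{\|y_k\|}{\|x_k-\bar x\|}\lambda_k\to y^*$, $\|\lambda_k\|\to\infty$, $\frac{y_k}{\|y_k\|}-\frac{\lambda_k}{\|\lambda_k\|}\to0$, there is $\lambda$ with $(x^*,-\lambda)\in\mathcal N_{\operatorname{gph}\Phi}((\bar x,0);(u,0))$. Locally polyhedral: intersection with a box around $g(\bar x)$ is a finite union of convex polyhedra. *)

theory Defs
  imports "HOL-Analysis.Analysis"
begin

definition gph :: "('a \<Rightarrow> 'b set) \<Rightarrow> ('a \<times> 'b) set" where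
  "gph \<Phi> = {(x, y). y \<in> \<Phi> x}"

definition reg_normal :: "'a::real_inner set \<Rightarrow> 'a \<Rightarrow> 'a set" where
  "reg_normal Q z = {\<eta>. z \<in> Q \<and>
     (\<forall>\<epsilon>>0. \<exists>\<delta>>0. \<forall>z'\<in>Q. norm (z' - z) < \<delta> \<longrightarrow> \<eta> \<bullet> (z' - z) \<le> \<epsilon> * norm (z' - z))}"

definition dir_lim_normal :: "'a::real_inner set \<Rightarrow> 'a \<Rightarrow> 'a \<Rightarrow> 'a set" where
  "dir_lim_normal Q z w = {\<eta>. \<exists>(t::nat \<Rightarrow> real) wk \<eta>k.
     (\<forall>k. t k > 0) \<and> t \<longlonglongrightarrow> 0 \<and> wk \<longlonglongrightarrow> w \<and> \<eta>k \<longlonglongrightarrow> \<eta> \<and>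
     (\<forall>k. \<eta>k k \<in> reg_normal Q (z + t k *\<^sub>R wk k))}"

definition reg_coderiv :: "('a::real_inner \<Rightarrow> 'b::real_inner set) \<Rightarrow> 'a \<Rightarrow> 'b \<Rightarrow> 'b \<Rightarrow> 'a set" where
  "reg_coderiv \<Phi> x y l = {xs. (xs, - l) \<in> reg_normal (gph \<Phi>) (x, y)}"

definition strongly_asymp_regular_dir ::
  "('a::real_inner \<Rightarrow> 'b::real_inner set) \<Rightarrow> 'a \<Rightarrow> 'a \<Rightarrow> bool" where
  "strongly_asymp_regular_dir \<Phi> xbar u \<longleftrightarrow>
    (\<forall>(x::nat \<Rightarrow> 'a) (y::nat \<Rightarrow> 'b) (xs::nat \<Rightarrow> 'a) (lam::nat \<Rightarrow> 'b) xstar ystar.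
      (\<forall>k. (x k, y k) \<in> gph \<Phi>) \<and>
      (\<forall>k. 0 \<notin> \<Phi> (x k)) \<and> (\<forall>k. y k \<noteq> 0) \<and>
      (\<forall>k. xs k \<in> reg_coderiv \<Phi> (x k) (y k) (lam k)) \<and>
      x \<longlonglongrightarrow> xbar \<and> y \<longlonglongrightarrow> 0 \<and> xs \<longlonglongrightarrow> xstar \<and>
      (\<lambda>k. (1 / norm (x k - xbar)) *\<^sub>R (x k - xbar)) \<longlonglongrightarrow> u \<and>
      (\<lambda>k. (1 / norm (x k - xbar)) *\<^sub>R y k) \<longlonglongrightarrow> 0 \<and>
      (\<lambda>k. (norm (y k) / norm (x k - xbar)) *\<^sub>R lam k) \<longlonglongrightarrow> ystar \<and>
      filterlim (\<lambda>k. norm (lam k)) at_top sequentially \<and>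
      (\<lambda>k. (1 / norm (y k)) *\<^sub>R y k - (1 / norm (lam k)) *\<^sub>R lam k) \<longlonglongrightarrow> 0
      \<longrightarrow> (\<exists>l. (xstar, - l) \<in> dir_lim_normal (gph \<Phi>) (xbar, 0) (u, 0)))"

text \<open>FOSCMS(u), with g' xbar the derivative of g at xbar.\<close>
definition FOSCMS ::
  "('a::euclidean_space \<Rightarrow> 'b::euclidean_space) \<Rightarrow> ('a \<Rightarrow> 'a \<Rightarrow>\<^sub>L 'b) \<Rightarrow> 'b set \<Rightarrow> 'a \<Rightarrow> 'a \<Rightarrow> bool" where
  "FOSCMS g g' D xbar u \<longleftrightarrow>
    (\<forall>ys. adjoint (blinfun_apply (g' xbar)) ys = 0 \<and>
          ys \<in> dir_lim_normal D (g xbar) (g' xbar u) \<longrightarrow> ys = 0)"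

text \<open>SOSCMS(u); the Hessian of x |-> <y*, g x> at xbar applied to [u,u] is
  <y*, g''(xbar) u u>, where g'' is the second derivative of g.\<close>
definition SOSCMS ::
  "('a::euclidean_space \<Rightarrow> 'b::euclidean_space) \<Rightarrow> ('a \<Rightarrow> 'a \<Rightarrow>\<^sub>L 'b) \<Rightarrow> ('a \<Rightarrow> 'a \<Rightarrow>\<^sub>L 'a \<Rightarrow>\<^sub>L 'b)
     \<Rightarrow> 'b set \<Rightarrow> 'a \<Rightarrow> 'a \<Rightarrow> bool" where
  "SOSCMS g g' g'' D xbar u \<longleftrightarrow>
    (\<forall>ys. adjoint (blinfun_apply (g' xbar)) ys = 0 \<and>
          ys \<bullet> (g'' xbar u u) \<ge> 0 \<and>
          ys \<in> dir_lim_normal D (g xbar) (g' xbar u) \<longrightarrow> ys = 0)"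

definition locally_polyhedral :: "'b::euclidean_space set \<Rightarrow> 'b \<Rightarrow> bool" where
  "locally_polyhedral D z \<longleftrightarrow>
    (\<exists>r>0. \<exists>F. finite F \<and> (\<forall>P\<in>F. polyhedron P) \<and>
       D \<inter> cbox (z - r *\<^sub>R One) (z + r *\<^sub>R One) = \<Union>F)"

end

theory Submission
  imports Defs
begin

text \<open>
  Take sequences \<open>x\<^sub>k, y\<^sub>k, x\<^sup>*\<^sub>k, \<lambda>\<^sub>k\<close> as in the definition of strong asymptotic regularity.
  Regular normals to \<open>{(x, y). g x - y \<in> D}\<close> are exactly the pairs \<open>(\<nabla>g(x)\<^sup>* \<lambda>, -\<lambda>)\<close> with
  \<open>\<lambda>\<close> a regular normal to \<open>D\<close> at \<open>g x - y\<close>. Every limit \<open>\<eta>\<close> of \<open>\<lambda>\<^sub>k / |\<lambda>\<^sub>k|\<close> is then a unit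
  vector in \<open>N\<^sub>D(g xbar; \<nabla>g(xbar) u)\<close> with \<open>\<nabla>g(xbar)\<^sup>* \<eta> = 0\<close>, which FOSCMS(u) excludes.

  For locally polyhedral \<open>D\<close> let \<open>t\<^sub>k = |x\<^sub>k - xbar|\<close>. If \<open>t\<^sub>k |\<lambda>\<^sub>k| \<rightarrow> 0\<close>, then
  \<open>\<nabla>g(xbar)\<^sup>* \<lambda>\<^sub>k \<rightarrow> x\<^sup>*\<close>; near \<open>g xbar\<close> only finitely many regular normal cones of \<open>D\<close> occur,
  each a polyhedral cone with closed linear images, so \<open>x\<^sup>* = \<nabla>g(xbar)\<^sup>* \<lambda>\<close> for one \<open>\<lambda>\<close> that is
  a regular normal at infinitely many points \<open>g x\<^sub>k - y\<^sub>k\<close>, which yields the required limiting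
  normal. Otherwise polyhedrality forces \<open>\<lambda>\<^sub>k\<close> to be orthogonal to \<open>\<nabla>g(xbar) u\<close>, and a
  second-order expansion of \<open>\<lambda>\<^sub>k \<bullet> y\<^sub>k \<ge> 0\<close> gives \<open>\<eta> \<bullet> \<nabla>\<^sup>2g(xbar)[u, u] \<ge> 0\<close>, which SOSCMS(u)
  excludes.
\<close>

section \<open>Differentiable maps\<close>

lemma linear_blinfun_apply: "linear (blinfun_apply F)"
  by (rule bounded_linear.linear[OF blinfun.bounded_linear_right])

lemma has_derivative_eventually_remainder_le:
  assumes "(\<phi> has_derivative \<phi>') (at x)" and "e > 0"
  shows "\<forall>\<^sub>F x' in nhds x. norm (\<phi> x' - \<phi> x - \<phi>' (x' - x)) \<le> e * norm (x' - x)"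
  using assms unfolding has_derivative_at_alt eventually_nhds_metric by (simp add: dist_norm)

lemma has_derivative_eventually_lipschitz:
  assumes der: "(\<phi> has_derivative \<phi>') (at x)"
  obtains K where "K > 0" "\<forall>\<^sub>F x' in nhds x. norm (\<phi> x' - \<phi> x) \<le> K * norm (x' - x)"
proof -
  obtain K where "K > 0" and K: "\<And>h. norm (\<phi>' h) \<le> norm h * K"
    using bounded_linear.pos_bounded[OF has_derivative_bounded_linear[OF der]] by blast
  have "\<forall>\<^sub>F x' in nhds x. norm (\<phi> x' - \<phi> x) \<le> (K + 1) * norm (x' - x)"
    using has_derivative_eventually_remainder_le[OF der zero_less_one]
  proof eventually_elim
    case (elim x')
    have "norm (\<phi> x' - \<phi> x) \<le> norm (\<phi>' (x' - x)) + norm (\<phi> x' - \<phi> x - \<phi>' (x' - x))"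
      using norm_triangle_ineq[of "\<phi>' (x' - x)" "\<phi> x' - \<phi> x - \<phi>' (x' - x)"] by simp
    with K[of "x' - x"] elim show ?case by (simp add: algebra_simps)
  qed
  with \<open>K > 0\<close> show thesis by (intro that[of "K + 1"]) simp_all
qed

lemma tendsto_difference_quotient_sequentially:
  assumes der: "(f has_derivative f') (at a)"
    and t: "\<And>k. t k > 0" "t \<longlonglongrightarrow> 0"
    and q: "(\<lambda>k. (1 / t k) *\<^sub>R (x k - a)) \<longlonglongrightarrow> v"
  shows "(\<lambda>k. (1 / t k) *\<^sub>R (f (x k) - f a)) \<longlonglongrightarrow> f' v"
proof -
  define r where "r y = (1 / norm (y - a)) *\<^sub>R (f y - (f a + f' (y - a)))" for y
  have lin: "bounded_linear f'" using der by (rule has_derivative_bounded_linear)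
  have "(r \<longlongrightarrow> 0) (at a)" using der unfolding has_derivative_within r_def by simp
  moreover have "r a = 0" by (simp add: r_def)
  ultimately have "isCont r a" by (simp add: isCont_def)
  have x_eq: "x = (\<lambda>k. a + t k *\<^sub>R ((1 / t k) *\<^sub>R (x k - a)))"
  proof
    show "x k = a + t k *\<^sub>R ((1 / t k) *\<^sub>R (x k - a))" for k
      using t(1)[of k] by simp
  qed
  have "(\<lambda>k. a + t k *\<^sub>R ((1 / t k) *\<^sub>R (x k - a))) \<longlonglongrightarrow> a + 0 *\<^sub>R v"
    by (intro tendsto_intros t q)
  then have "x \<longlonglongrightarrow> a" by (subst x_eq) simp
  with \<open>isCont r a\<close> have "(\<lambda>k. r (x k)) \<longlonglongrightarrow> 0"
    using isCont_tendsto_compose \<open>r a = 0\<close> by fastforce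
  then have "(\<lambda>k. f' ((1 / t k) *\<^sub>R (x k - a)) + norm ((1 / t k) *\<^sub>R (x k - a)) *\<^sub>R r (x k))
      \<longlonglongrightarrow> f' v + norm v *\<^sub>R 0"
    by (intro tendsto_intros bounded_linear.tendsto[OF lin] q)
  moreover have "f' ((1 / t k) *\<^sub>R (x k - a)) + norm ((1 / t k) *\<^sub>R (x k - a)) *\<^sub>R r (x k)
      = (1 / t k) *\<^sub>R (f (x k) - f a)" for k
  proof (cases "x k = a")
    case False
    then have "norm ((1 / t k) *\<^sub>R (x k - a)) *\<^sub>R r (x k)
        = (1 / t k) *\<^sub>R (f (x k) - (f a + f' (x k - a)))"
      using t(1)[of k] by (simp add: r_def)
    then show ?thesis by (simp add: linear_simps[OF lin] algebra_simps)
  qed (simp add: r_def linear_simps[OF lin])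
  ultimately show ?thesis by simp
qed

text \<open>The auxiliary function of the Taylor estimate: its increment over \<open>[0, 1]\<close> is the
  remainder \<open>g (a + h) - g a - g' (a + h) h + g'' a h h / 2\<close>.\<close>

lemma taylor_auxiliary_has_derivative:
  fixes g :: "'a::real_normed_vector \<Rightarrow> 'b::real_normed_vector"
    and g' :: "'a \<Rightarrow> 'a \<Rightarrow>\<^sub>L 'b" and g'' :: "'a \<Rightarrow> 'a \<Rightarrow>\<^sub>L 'a \<Rightarrow>\<^sub>L 'b"
  assumes g': "\<And>x. (g has_derivative g' x) (at x)"
    and g'': "\<And>x. (g' has_derivative g'' x) (at x)"
  shows "((\<lambda>s. g (a + s *\<^sub>R h) - s *\<^sub>R g' (a + s *\<^sub>R h) h + (s * s / 2) *\<^sub>R g'' a h h)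
    has_derivative (\<lambda>ds. ds *\<^sub>R (s *\<^sub>R (g'' a h h - g'' (a + s *\<^sub>R h) h h)))) (at s within S)"
proof -
  have path: "((\<lambda>s. a + s *\<^sub>R h) has_derivative (\<lambda>ds. ds *\<^sub>R h)) (at s within S)"
    by (auto intro!: derivative_eq_intros)
  have "((\<lambda>s. g' (a + s *\<^sub>R h)) has_derivative (\<lambda>ds. g'' (a + s *\<^sub>R h) (ds *\<^sub>R h))) (at s within S)"
    using has_derivative_compose[OF path g''] .
  then have "((\<lambda>s. g' (a + s *\<^sub>R h) h) has_derivative (\<lambda>ds. g'' (a + s *\<^sub>R h) (ds *\<^sub>R h) h))
      (at s within S)"
    by (rule bounded_linear.has_derivative[OF blinfun.bounded_linear_left])
  then have "((\<lambda>s. s *\<^sub>R g' (a + s *\<^sub>R h) h) has_derivative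
      (\<lambda>ds. s *\<^sub>R g'' (a + s *\<^sub>R h) (ds *\<^sub>R h) h + ds *\<^sub>R g' (a + s *\<^sub>R h) h)) (at s within S)"
    by (rule has_derivative_scaleR[OF has_derivative_ident])
  moreover have "((\<lambda>s. (s * s / 2) *\<^sub>R g'' a h h) has_derivative (\<lambda>ds. (s * ds) *\<^sub>R g'' a h h))
      (at s within S)"
    by (auto intro!: derivative_eq_intros simp: algebra_simps)
  ultimately have "((\<lambda>s. g (a + s *\<^sub>R h) - s *\<^sub>R g' (a + s *\<^sub>R h) h + (s * s / 2) *\<^sub>R g'' a h h)
      has_derivative (\<lambda>ds. g' (a + s *\<^sub>R h) (ds *\<^sub>R h)
        - (s *\<^sub>R g'' (a + s *\<^sub>R h) (ds *\<^sub>R h) h + ds *\<^sub>R g' (a + s *\<^sub>R h) h) + (s * ds) *\<^sub>R g'' a h h))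
      (at s within S)"
    using has_derivative_compose[OF path g'] by (intro has_derivative_add has_derivative_diff)
  moreover have "(\<lambda>ds. g' (a + s *\<^sub>R h) (ds *\<^sub>R h)
      - (s *\<^sub>R g'' (a + s *\<^sub>R h) (ds *\<^sub>R h) h + ds *\<^sub>R g' (a + s *\<^sub>R h) h) + (s * ds) *\<^sub>R g'' a h h)
      = (\<lambda>ds. ds *\<^sub>R (s *\<^sub>R (g'' a h h - g'' (a + s *\<^sub>R h) h h)))"
    by (rule ext) (simp add: blinfun.scaleR_right blinfun.scaleR_left algebra_simps)
  ultimately show ?thesis by simp
qed

lemma second_order_remainder_bound:
  fixes g :: "'a::real_normed_vector \<Rightarrow> 'b::real_normed_vector"
    and g' :: "'a \<Rightarrow> 'a \<Rightarrow>\<^sub>L 'b" and g'' :: "'a \<Rightarrow> 'a \<Rightarrow>\<^sub>L 'a \<Rightarrow>\<^sub>L 'b"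
  assumes g': "\<And>x. (g has_derivative g' x) (at x)"
    and g'': "\<And>x. (g' has_derivative g'' x) (at x)"
    and cont: "isCont g'' a" and "\<epsilon> > 0"
  shows "\<exists>\<delta>>0. \<forall>x. norm (x - a) < \<delta> \<longrightarrow>
     norm (g x - g a - g' x (x - a) + (1/2) *\<^sub>R g'' a (x - a) (x - a)) \<le> \<epsilon> * (norm (x - a))\<^sup>2"
proof -
  obtain \<delta> where "\<delta> > 0" and \<delta>: "\<And>x. dist x a < \<delta> \<Longrightarrow> dist (g'' x) (g'' a) < \<epsilon>"
    using cont \<open>\<epsilon> > 0\<close> unfolding continuous_at_eps_delta by blast
  have "norm (g x - g a - g' x (x - a) + (1/2) *\<^sub>R g'' a (x - a) (x - a)) \<le> \<epsilon> * (norm (x - a))\<^sup>2"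
    if "norm (x - a) < \<delta>" for x
  proof -
    define h where "h = x - a"
    define \<phi> where "\<phi> s = g (a + s *\<^sub>R h) - s *\<^sub>R g' (a + s *\<^sub>R h) h + (s * s / 2) *\<^sub>R g'' a h h"
      for s :: real
    define V where "V s = s *\<^sub>R (g'' a h h - g'' (a + s *\<^sub>R h) h h)" for s :: real
    have der: "(\<phi> has_derivative (\<lambda>ds. ds *\<^sub>R V s)) (at s within {0..1})" if "s \<in> {0..1}" for s
      unfolding \<phi>_def[abs_def] V_def by (rule taylor_auxiliary_has_derivative[OF g' g''])
    have bound: "onorm (\<lambda>ds. ds *\<^sub>R V s) \<le> \<epsilon> * (norm h)\<^sup>2" if "s \<in> {0..1}" for s
    proof -
      have "norm (s *\<^sub>R h) \<le> norm h" using that by (auto simp: mult_left_le_one_le)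
      then have "dist (g'' (a + s *\<^sub>R h)) (g'' a) < \<epsilon>"
        using \<open>norm (x - a) < \<delta>\<close> by (intro \<delta>) (simp add: dist_norm h_def)
      then have "norm (g'' a - g'' (a + s *\<^sub>R h)) \<le> \<epsilon>" by (simp add: dist_norm norm_minus_commute)
      have "onorm (\<lambda>ds. ds *\<^sub>R V s) = norm (V s)"
        using onorm_scaleR_left[of "\<lambda>x::real. x" "V s"] onorm_id[where 'a=real] by simp
      also have "\<dots> \<le> norm ((g'' a - g'' (a + s *\<^sub>R h)) h h)"
        using that by (simp add: V_def blinfun.diff_left mult_left_le_one_le)
      also have "\<dots> \<le> norm (g'' a - g'' (a + s *\<^sub>R h)) * norm h * norm h"
        by (meson norm_blinfun order_trans mult_right_mono norm_ge_zero)
      also have "\<dots> \<le> \<epsilon> * (norm h)\<^sup>2"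
        using \<open>norm (g'' a - g'' (a + s *\<^sub>R h)) \<le> \<epsilon>\<close>
        by (simp add: power2_eq_square mult_right_mono mult.assoc)
      finally show ?thesis .
    qed
    have "norm (\<phi> 1 - \<phi> 0) \<le> \<epsilon> * (norm h)\<^sup>2 * norm (1 - (0::real))"
      by (rule differentiable_bound[OF convex_real_interval(5) der bound]) auto
    moreover have "\<phi> 1 - \<phi> 0 = g x - g a - g' x (x - a) + (1/2) *\<^sub>R g'' a (x - a) (x - a)"
      by (simp add: \<phi>_def h_def)
    ultimately show ?thesis by (simp add: h_def)
  qed
  with \<open>\<delta> > 0\<close> show ?thesis by blast
qed

lemma second_order_remainder_tendsto:
  fixes g :: "'a::real_normed_vector \<Rightarrow> 'b::real_normed_vector"
    and g' :: "'a \<Rightarrow> 'a \<Rightarrow>\<^sub>L 'b" and g'' :: "'a \<Rightarrow> 'a \<Rightarrow>\<^sub>L 'a \<Rightarrow>\<^sub>L 'b"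
  assumes "\<And>x. (g has_derivative g' x) (at x)" "\<And>x. (g' has_derivative g'' x) (at x)"
    and "isCont g'' a"
  shows "((\<lambda>x. norm (g x - g a - g' x (x - a) + (1/2) *\<^sub>R g'' a (x - a) (x - a)) / (norm (x - a))\<^sup>2)
    \<longlongrightarrow> 0) (at a)"
proof (rule LIM_I)
  fix \<epsilon> :: real assume "\<epsilon> > 0"
  then obtain \<delta> where "\<delta> > 0" and \<delta>: "\<forall>x. norm (x - a) < \<delta> \<longrightarrow>
      norm (g x - g a - g' x (x - a) + (1/2) *\<^sub>R g'' a (x - a) (x - a)) \<le> \<epsilon> / 2 * (norm (x - a))\<^sup>2"
    using second_order_remainder_bound[OF assms, of "\<epsilon> / 2"] by auto
  show "\<exists>\<delta>>0. \<forall>x. x \<noteq> a \<and> norm (x - a) < \<delta> \<longrightarrow>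
      norm (norm (g x - g a - g' x (x - a) + (1/2) *\<^sub>R g'' a (x - a) (x - a)) / (norm (x - a))\<^sup>2 - 0) < \<epsilon>"
  proof (intro exI[of _ \<delta>] conjI allI impI)
    fix x assume x: "x \<noteq> a \<and> norm (x - a) < \<delta>"
    define q where "q = norm (g x - g a - g' x (x - a) + (1/2) *\<^sub>R g'' a (x - a) (x - a)) / (norm (x - a))\<^sup>2"
    have "q \<le> \<epsilon> / 2" using \<delta> x by (simp add: q_def divide_le_eq)
    moreover have "q \<ge> 0" by (simp add: q_def)
    ultimately show "norm (norm (g x - g a - g' x (x - a) + (1/2) *\<^sub>R g'' a (x - a) (x - a))
        / (norm (x - a))\<^sup>2 - 0) < \<epsilon>"
      unfolding q_def[symmetric] using \<open>\<epsilon> > 0\<close> by simp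
  qed (rule \<open>\<delta> > 0\<close>)
qed

lemma norm_adjoint_diff_le:
  fixes F G :: "'a::euclidean_space \<Rightarrow>\<^sub>L 'b::euclidean_space"
  shows "norm (adjoint F l - adjoint G l) \<le> norm (F - G) * norm l"
proof -
  define v where "v = adjoint F l - adjoint G l"
  have "(norm v)\<^sup>2 = (F - G) v \<bullet> l"
    using adjoint_works[OF linear_blinfun_apply[of F]]
      adjoint_works[OF linear_blinfun_apply[of G]]
    by (simp add: v_def power2_norm_eq_inner inner_diff_right blinfun.diff_left inner_diff_left)
  also have "\<dots> \<le> norm ((F - G) v) * norm l" by (rule Cauchy_Schwarz_ineq2[THEN abs_le_D1])
  also have "\<dots> \<le> norm (F - G) * norm v * norm l" by (intro mult_right_mono norm_blinfun) auto
  finally have "norm v * norm v \<le> norm v * (norm (F - G) * norm l)"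
    by (simp add: power2_eq_square algebra_simps)
  then show ?thesis unfolding v_def[symmetric]
    by (cases "norm v = 0") (auto simp: mult_le_cancel_left)
qed

section \<open>Regular normals\<close>

lemma reg_normal_memD: "\<eta> \<in> reg_normal Q z \<Longrightarrow> z \<in> Q"
  unfolding reg_normal_def by blast

lemma reg_normal_iff_eventually:
  "\<eta> \<in> reg_normal Q z \<longleftrightarrow>
     z \<in> Q \<and> (\<forall>\<epsilon>>0. \<forall>\<^sub>F z' in nhds z. z' \<in> Q \<longrightarrow> \<eta> \<bullet> (z' - z) \<le> \<epsilon> * norm (z' - z))"
  unfolding reg_normal_def eventually_nhds_metric by (simp add: dist_norm) meson

lemma conic_reg_normal: "conic (reg_normal Q z)"
  unfolding conic_def
proof (intro allI impI)
  fix \<eta> and c :: real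
  assume \<eta>: "\<eta> \<in> reg_normal Q z" and c: "0 \<le> c"
  have "\<forall>\<^sub>F z' in nhds z. z' \<in> Q \<longrightarrow> c *\<^sub>R \<eta> \<bullet> (z' - z) \<le> \<epsilon> * norm (z' - z)" if "\<epsilon> > 0" for \<epsilon>
  proof -
    have "\<epsilon> / (c + 1) > 0" using that c by simp
    then have "\<forall>\<^sub>F z' in nhds z. z' \<in> Q \<longrightarrow> \<eta> \<bullet> (z' - z) \<le> \<epsilon> / (c + 1) * norm (z' - z)"
      using \<eta> unfolding reg_normal_iff_eventually by blast
    then show ?thesis
    proof eventually_elim
      case (elim z')
      have "c * (\<eta> \<bullet> (z' - z)) \<le> c * (\<epsilon> / (c + 1) * norm (z' - z))"
        if "z' \<in> Q" using elim that c by (intro mult_left_mono) auto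
      also have "\<dots> \<le> \<epsilon> * norm (z' - z)"
        using c \<open>\<epsilon> > 0\<close> by (simp add: field_simps mult_right_mono)
      finally show ?case by simp
    qed
  qed
  then show "c *\<^sub>R \<eta> \<in> reg_normal Q z"
    using \<eta> unfolding reg_normal_iff_eventually by blast
qed

lemma reg_normal_subset:
  "\<eta> \<in> reg_normal Q z \<Longrightarrow> P \<subseteq> Q \<Longrightarrow> z \<in> P \<Longrightarrow> \<eta> \<in> reg_normal P z"
  unfolding reg_normal_def by blast

lemma nonpos_if_le_mult_all_pos:
  fixes a b :: real
  assumes "\<And>\<epsilon>. \<epsilon> > 0 \<Longrightarrow> a \<le> \<epsilon> * b"
  shows "a \<le> 0"
proof (rule ccontr)
  assume "\<not> a \<le> 0"
  then have "a / (2 * (\<bar>b\<bar> + 1)) > 0" by simp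
  from assms[OF this] show False
    using \<open>\<not> a \<le> 0\<close> by (simp add: field_simps) (smt (verit) mult_left_mono abs_ge_self)
qed

lemma reg_normal_inner_tangent_nonpos:
  assumes \<eta>: "\<eta> \<in> reg_normal Q z" and p: "\<And>k. p k \<in> Q"
    and t: "\<And>k. t k > 0" "t \<longlonglongrightarrow> 0"
    and tangent: "(\<lambda>k. (1 / t k) *\<^sub>R (p k - z)) \<longlonglongrightarrow> v"
  shows "\<eta> \<bullet> v \<le> 0"
proof (rule nonpos_if_le_mult_all_pos)
  fix \<epsilon> :: real assume "\<epsilon> > 0"
  have p_eq: "p = (\<lambda>k. z + t k *\<^sub>R ((1 / t k) *\<^sub>R (p k - z)))"
  proof
    show "p k = z + t k *\<^sub>R ((1 / t k) *\<^sub>R (p k - z))" for k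
      using t(1)[of k] by simp
  qed
  have "(\<lambda>k. z + t k *\<^sub>R ((1 / t k) *\<^sub>R (p k - z))) \<longlonglongrightarrow> z + 0 *\<^sub>R v"
    by (intro tendsto_intros t tangent)
  then have "p \<longlonglongrightarrow> z" by (subst p_eq) simp
  moreover have "\<forall>\<^sub>F z' in nhds z. z' \<in> Q \<longrightarrow> \<eta> \<bullet> (z' - z) \<le> \<epsilon> * norm (z' - z)"
    using \<eta> \<open>\<epsilon> > 0\<close> unfolding reg_normal_iff_eventually by blast
  ultimately have "\<forall>\<^sub>F k in sequentially. \<eta> \<bullet> (p k - z) \<le> \<epsilon> * norm (p k - z)"
    using p by (auto dest: eventually_compose_filterlim[rotated])
  then have "\<forall>\<^sub>F k in sequentially.
      \<eta> \<bullet> ((1 / t k) *\<^sub>R (p k - z)) \<le> \<epsilon> * norm ((1 / t k) *\<^sub>R (p k - z))"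
  proof eventually_elim
    case (elim k)
    then show ?case using t(1)[of k] by (simp add: divide_right_mono)
  qed
  moreover have "(\<lambda>k. \<eta> \<bullet> ((1 / t k) *\<^sub>R (p k - z))) \<longlonglongrightarrow> \<eta> \<bullet> v"
    and "(\<lambda>k. \<epsilon> * norm ((1 / t k) *\<^sub>R (p k - z))) \<longlonglongrightarrow> \<epsilon> * norm v"
    by (intro tendsto_intros tangent)+
  ultimately show "\<eta> \<bullet> v \<le> \<epsilon> * norm v"
    by (intro tendsto_le[OF trivial_limit_sequentially]) auto
qed

lemma reg_normal_convex_inner_nonpos:
  assumes "convex P" and \<eta>: "\<eta> \<in> reg_normal P z" and "p \<in> P"
  shows "\<eta> \<bullet> (p - z) \<le> 0"
proof (rule reg_normal_inner_tangent_nonpos[OF \<eta>])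
  define t :: "nat \<Rightarrow> real" where "t k = 1 / (Suc k)" for k
  show "t k > 0" for k by (simp add: t_def)
  show "t \<longlonglongrightarrow> 0" unfolding t_def by (rule LIMSEQ_Suc[OF lim_inverse_n'])
  have "z \<in> P" using \<eta> by (rule reg_normal_memD)
  have "(1 - t k) *\<^sub>R z + t k *\<^sub>R p \<in> P" for k
    using \<open>convex P\<close> \<open>z \<in> P\<close> \<open>p \<in> P\<close> by (rule convexD) (auto simp: t_def)
  then show "z + t k *\<^sub>R (p - z) \<in> P" for k by (simp add: algebra_simps)
  show "(\<lambda>k. (1 / t k) *\<^sub>R (z + t k *\<^sub>R (p - z) - z)) \<longlonglongrightarrow> p - z"
    by (simp add: t_def)
qed

lemma reg_normal_preimage:
  fixes \<phi> :: "'a::euclidean_space \<Rightarrow> 'b::euclidean_space"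
  assumes \<eta>: "\<eta> \<in> reg_normal Q (\<phi> x)" and der: "(\<phi> has_derivative \<phi>') (at x)"
  shows "adjoint \<phi>' \<eta> \<in> reg_normal (\<phi> -` Q) x"
  unfolding reg_normal_iff_eventually
proof (intro conjI allI impI)
  show "x \<in> \<phi> -` Q" using reg_normal_memD[OF \<eta>] by simp
  fix \<epsilon> :: real assume "\<epsilon> > 0"
  obtain K where "K > 0" and lipschitz: "\<forall>\<^sub>F x' in nhds x. norm (\<phi> x' - \<phi> x) \<le> K * norm (x' - x)"
    using has_derivative_eventually_lipschitz[OF der] by blast
  define \<epsilon>\<^sub>1 where "\<epsilon>\<^sub>1 = \<epsilon> / 2 / K"
  define \<epsilon>\<^sub>2 where "\<epsilon>\<^sub>2 = \<epsilon> / 2 / (norm \<eta> + 1)"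
  have "\<epsilon>\<^sub>1 > 0" "\<epsilon>\<^sub>2 > 0"
    unfolding \<epsilon>\<^sub>1_def \<epsilon>\<^sub>2_def using \<open>\<epsilon> > 0\<close> \<open>K > 0\<close> by (auto intro!: divide_pos_pos add_nonneg_pos)
  have "\<epsilon>\<^sub>1 * K = \<epsilon> / 2" using \<open>K > 0\<close> by (simp add: \<epsilon>\<^sub>1_def)
  have "norm \<eta> * \<epsilon>\<^sub>2 = \<epsilon> / 2 * (norm \<eta> / (norm \<eta> + 1))" by (simp add: \<epsilon>\<^sub>2_def)
  also have "\<dots> \<le> \<epsilon> / 2 * 1"
    using \<open>\<epsilon> > 0\<close> by (intro mult_left_mono) (auto simp: divide_le_eq add_nonneg_pos)
  finally have "norm \<eta> * \<epsilon>\<^sub>2 \<le> \<epsilon> / 2" by simp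
  have "isCont \<phi> x" using der by (rule has_derivative_continuous)
  then have "filterlim \<phi> (nhds (\<phi> x)) (nhds x)" by (simp add: tendsto_nhds_iff isCont_def)
  moreover have "\<forall>\<^sub>F q in nhds (\<phi> x). q \<in> Q \<longrightarrow> \<eta> \<bullet> (q - \<phi> x) \<le> \<epsilon>\<^sub>1 * norm (q - \<phi> x)"
    using \<eta> \<open>\<epsilon>\<^sub>1 > 0\<close> unfolding reg_normal_iff_eventually by blast
  ultimately have "\<forall>\<^sub>F x' in nhds x.
      \<phi> x' \<in> Q \<longrightarrow> \<eta> \<bullet> (\<phi> x' - \<phi> x) \<le> \<epsilon>\<^sub>1 * norm (\<phi> x' - \<phi> x)"
    by (rule eventually_compose_filterlim[rotated])
  with lipschitz has_derivative_eventually_remainder_le[OF der \<open>\<epsilon>\<^sub>2 > 0\<close>]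
  show "\<forall>\<^sub>F x' in nhds x. x' \<in> \<phi> -` Q \<longrightarrow> adjoint \<phi>' \<eta> \<bullet> (x' - x) \<le> \<epsilon> * norm (x' - x)"
  proof (eventually_elim, intro impI)
    case (elim x')
    define N where "N = norm (x' - x)"
    define r where "r = \<phi> x' - \<phi> x - \<phi>' (x' - x)"
    assume "x' \<in> \<phi> -` Q"
    then have "\<eta> \<bullet> (\<phi> x' - \<phi> x) \<le> \<epsilon>\<^sub>1 * (K * N)"
      using elim(1,3) \<open>\<epsilon>\<^sub>1 > 0\<close> by (smt (verit) N_def mult_left_mono vimageE)
    moreover have "- (\<eta> \<bullet> r) \<le> norm \<eta> * (\<epsilon>\<^sub>2 * N)"
      using Cauchy_Schwarz_ineq2[of \<eta> r] elim(2) by (smt (verit) N_def r_def mult_left_mono norm_ge_zero)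
    moreover have "adjoint \<phi>' \<eta> \<bullet> (x' - x) = \<eta> \<bullet> (\<phi> x' - \<phi> x) - \<eta> \<bullet> r"
      using adjoint_clauses(2)[OF has_derivative_linear[OF der]]
      by (simp add: r_def inner_diff_right linear_diff[OF has_derivative_linear[OF der]])
    moreover have "\<epsilon>\<^sub>1 * (K * N) = \<epsilon> / 2 * N"
      using \<open>\<epsilon>\<^sub>1 * K = \<epsilon> / 2\<close> by (simp flip: mult.assoc)
    moreover have "norm \<eta> * (\<epsilon>\<^sub>2 * N) \<le> \<epsilon> / 2 * N"
      using mult_right_mono[OF \<open>norm \<eta> * \<epsilon>\<^sub>2 \<le> \<epsilon> / 2\<close> norm_ge_zero[of "x' - x"]]
      by (simp only: N_def mult.assoc)
    moreover have "\<epsilon> / 2 * N + \<epsilon> / 2 * N = \<epsilon> * N" by simp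
    ultimately have "adjoint \<phi>' \<eta> \<bullet> (x' - x) \<le> \<epsilon> * N" by linarith
    then show "adjoint \<phi>' \<eta> \<bullet> (x' - x) \<le> \<epsilon> * norm (x' - x)" by (simp add: N_def)
  qed
qed

lemma gph_eq_constraint_set:
  fixes g :: "'a \<Rightarrow> 'b::ab_group_add"
  shows "gph (\<lambda>x. {g x - d | d. d \<in> D}) = {(x, y). g x - y \<in> D}"
proof -
  have "y \<in> {g x - d | d. d \<in> D} \<longleftrightarrow> g x - y \<in> D" for x y
  proof
    show "y \<in> {g x - d | d. d \<in> D} \<Longrightarrow> g x - y \<in> D" by auto
    show "g x - y \<in> D \<Longrightarrow> y \<in> {g x - d | d. d \<in> D}"
      by (intro CollectI exI[of _ "g x - y"]) simp
  qed
  then show ?thesis unfolding gph_def by auto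
qed

lemma reg_normal_constraint_setD:
  fixes g :: "'a::euclidean_space \<Rightarrow> 'b::euclidean_space"
  assumes "(\<xi>, - l) \<in> reg_normal {(x, y). g x - y \<in> D} (x, y)"
  shows "l \<in> reg_normal D (g x - y)"
proof -
  define \<psi> where "\<psi> d = (x, g x - d)" for d
  have "(\<psi> has_derivative (\<lambda>h. (0, - h))) (at (g x - y))"
    unfolding \<psi>_def by (auto intro!: derivative_eq_intros)
  moreover have "(\<xi>, - l) \<in> reg_normal {(x, y). g x - y \<in> D} (\<psi> (g x - y))"
    using assms by (simp add: \<psi>_def)
  ultimately have "adjoint (\<lambda>h. (0, - h)) (\<xi>, - l) \<in> reg_normal (\<psi> -` {(x, y). g x - y \<in> D}) (g x - y)"
    by (intro reg_normal_preimage)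
  moreover have "adjoint (\<lambda>h::'b. (0::'a, - h)) = (\<lambda>q. - snd q)"
    by (rule adjoint_unique) (simp add: inner_prod_def)
  then have "adjoint (\<lambda>h::'b. (0::'a, - h)) (\<xi>, - l) = l" by simp
  moreover have "\<psi> -` {(x, y). g x - y \<in> D} = D" by (auto simp: \<psi>_def)
  ultimately show ?thesis by simp
qed

lemma reg_normal_constraint_set:
  fixes g :: "'a::euclidean_space \<Rightarrow> 'b::euclidean_space"
  assumes l: "l \<in> reg_normal D (g x - y)" and der: "(g has_derivative G) (at x)"
  shows "(adjoint G l, - l) \<in> reg_normal {(x, y). g x - y \<in> D} (x, y)"
proof -
  define \<phi> where "\<phi> p = g (fst p) - snd p" for p :: "'a \<times> 'b"
  have "((\<lambda>p. g (fst p)) has_derivative (\<lambda>h. G (fst h))) (at (x, y))"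
    by (rule has_derivative_compose[OF has_derivative_fst[OF has_derivative_ident]]) (simp add: der)
  then have "(\<phi> has_derivative (\<lambda>h. G (fst h) - snd h)) (at (x, y))"
    unfolding \<phi>_def by (auto intro!: derivative_eq_intros)
  then have "adjoint (\<lambda>h. G (fst h) - snd h) l \<in> reg_normal (\<phi> -` D) (x, y)"
    using l by (intro reg_normal_preimage) (simp add: \<phi>_def)
  moreover have "adjoint (\<lambda>h. G (fst h) - snd h) = (\<lambda>l. (adjoint G l, - l))"
    using adjoint_works[OF has_derivative_linear[OF der]]
    by (intro adjoint_unique) (simp add: inner_prod_def inner_diff_left)
  moreover have "\<phi> -` D = {(x, y). g x - y \<in> D}" by (auto simp: \<phi>_def)
  ultimately show ?thesis by simp
qed

lemma reg_normal_constraint_set_adjoint: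
  fixes g :: "'a::euclidean_space \<Rightarrow> 'b::euclidean_space"
  assumes normal: "(\<xi>, - l) \<in> reg_normal {(x, y). g x - y \<in> D} (x, y)"
    and der: "(g has_derivative G) (at x)"
  shows "\<xi> = adjoint G l"
proof -
  have tangent: "\<xi> \<bullet> v - l \<bullet> G v \<le> 0" for v
  proof -
    define t :: "nat \<Rightarrow> real" where "t k = 1 / Suc k" for k
    have t: "t k > 0" "t \<longlonglongrightarrow> 0" for k
      unfolding t_def by (simp, rule LIMSEQ_Suc[OF lim_inverse_n'])
    then have t_ne: "t k \<noteq> 0" for k by (metis less_irrefl)
    have "g x - y \<in> D" using reg_normal_memD[OF normal] by simp
    then have "(x + t k *\<^sub>R v, y + (g (x + t k *\<^sub>R v) - g x)) \<in> {(x, y). g x - y \<in> D}" for k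
      by simp
    moreover have "(\<lambda>k. (1 / t k) *\<^sub>R (g (x + t k *\<^sub>R v) - g x)) \<longlonglongrightarrow> G v"
      using t by (intro tendsto_difference_quotient_sequentially[OF der]) (auto simp: t_ne)
    then have "(\<lambda>k. (1 / t k) *\<^sub>R ((x + t k *\<^sub>R v, y + (g (x + t k *\<^sub>R v) - g x)) - (x, y)))
        \<longlonglongrightarrow> (v, G v)"
      using t by (simp add: tendsto_Pair t_ne)
    ultimately have "(\<xi>, - l) \<bullet> (v, G v) \<le> 0"
      by (intro reg_normal_inner_tangent_nonpos[OF normal _ t])
    then show ?thesis by (simp add: inner_prod_def)
  qed
  have "\<xi> \<bullet> v - l \<bullet> G v = (\<xi> - adjoint G l) \<bullet> v" for v
    using adjoint_clauses(2)[OF has_derivative_linear[OF der]] by (simp add: inner_diff_left)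
  with tangent[of "\<xi> - adjoint G l"] have "(\<xi> - adjoint G l) \<bullet> (\<xi> - adjoint G l) \<le> 0" by simp
  then show ?thesis using inner_gt_zero_iff[of "\<xi> - adjoint G l"] by (simp add: not_less[symmetric])
qed

section \<open>Polyhedral cones\<close>

lemma farkas_convex_cone_hull:
  fixes G :: "'a::euclidean_space set"
  assumes "finite G"
  shows "convex_cone hull G = {l. \<forall>v. (\<forall>a\<in>G. a \<bullet> v \<le> 0) \<longrightarrow> l \<bullet> v \<le> 0}"
    (is "_ = ?polar")
proof
  show "convex_cone hull G \<subseteq> ?polar"
  proof (rule hull_minimal)
    show "G \<subseteq> ?polar" by auto
    show "convex_cone ?polar"
      unfolding convex_cone_def convex_def conic_def
      by (auto simp: inner_add_left intro!: add_nonpos_nonpos mult_nonneg_nonpos exI[of _ 0])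
  qed
  show "?polar \<subseteq> convex_cone hull G"
  proof
    fix l assume l: "l \<in> ?polar"
    show "l \<in> convex_cone hull G"
    proof (rule ccontr)
      assume "l \<notin> convex_cone hull G"
      then obtain a b where ab: "a \<bullet> l < b" "\<forall>x\<in>convex_cone hull G. a \<bullet> x > b"
        using separating_hyperplane_closed_point[OF convex_convex_cone_hull
            closed_convex_cone_hull[OF assms]] by blast
      have "b < 0" using ab(2) convex_cone_hull_contains_0 by fastforce
      have "a \<bullet> x \<ge> 0" if "x \<in> convex_cone hull G" for x
      proof (rule ccontr)
        assume "\<not> a \<bullet> x \<ge> 0"
        then have "b / (a \<bullet> x) \<ge> 0" using \<open>b < 0\<close> by (simp add: divide_nonpos_neg)
        then have "(b / (a \<bullet> x)) *\<^sub>R x \<in> convex_cone hull G"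
          using that conicD[OF conic_convex_cone_hull] by blast
        then have "a \<bullet> ((b / (a \<bullet> x)) *\<^sub>R x) > b" using ab(2) by blast
        with \<open>\<not> a \<bullet> x \<ge> 0\<close> show False by simp
      qed
      then have "\<forall>g\<in>G. g \<bullet> (- a) \<le> 0"
        using hull_subset[of G convex_cone] by (auto simp: inner_commute)
      then have "l \<bullet> (- a) \<le> 0" using l by blast
      with ab \<open>b < 0\<close> show False by (simp add: inner_commute)
    qed
  qed
qed

lemma polyhedron_obtain_inequalities:
  fixes P :: "'a::euclidean_space set"
  assumes "polyhedron P"
  obtains C where "finite C" "P = {x. \<forall>c\<in>C. fst c \<bullet> x \<le> snd c}"
proof -
  obtain H where H: "finite H" "P = \<Inter>H" "\<forall>h\<in>H. \<exists>a b. a \<noteq> 0 \<and> h = {x. a \<bullet> x \<le> b}"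
    using assms unfolding polyhedron_def by blast
  have "\<forall>h\<in>H. \<exists>ab. h = {x. fst ab \<bullet> x \<le> snd ab}"
  proof
    fix h assume "h \<in> H"
    then obtain a b where "h = {x. a \<bullet> x \<le> b}" using H(3) by blast
    then show "\<exists>ab. h = {x. fst ab \<bullet> x \<le> snd ab}" by (intro exI[of _ "(a, b)"]) simp
  qed
  from bchoice[OF this] obtain c where c: "\<forall>h\<in>H. h = {x. fst (c h) \<bullet> x \<le> snd (c h)}"
    by blast
  show thesis
  proof
    show "finite (c ` H)" using H(1) by simp
    show "P = {x. \<forall>c\<in>c ` H. fst c \<bullet> x \<le> snd c}" using H(2) c by auto
  qed
qed

lemma linear_preimage_min_norm:
  fixes M :: "'a::euclidean_space set" and B :: "'a \<Rightarrow> 'b::euclidean_space"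
  assumes "closed M" "linear B" "y \<in> B ` M"
  shows "\<exists>\<mu>. \<mu> \<in> M \<and> B \<mu> = y \<and> (\<forall>z\<in>M. B z = y \<longrightarrow> norm \<mu> \<le> norm z)"
proof -
  have "continuous_on UNIV B"
    using \<open>linear B\<close> by (simp add: linear_continuous_on linear_conv_bounded_linear)
  then have "closed (M \<inter> B -` {y})"
    using \<open>closed M\<close> by (simp add: closed_Int closed_vimage)
  moreover have "M \<inter> B -` {y} \<noteq> {}" using assms(3) by blast
  ultimately obtain \<mu> where \<mu>: "\<mu> \<in> M \<inter> B -` {y}"
    and min: "\<And>z. z \<in> M \<inter> B -` {y} \<Longrightarrow> dist 0 \<mu> \<le> dist 0 z"
    by (metis distance_attains_inf)
  show ?thesis
  proof (intro exI conjI ballI impI)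
    show "\<mu> \<in> M" "B \<mu> = y" using \<mu> by simp_all
    show "norm \<mu> \<le> norm z" if "z \<in> M" "B z = y" for z
      using min[of z] that by simp
  qed
qed

text \<open>This is where polyhedrality enters: the statement fails, e.g., for the second-order cone,
  whose linear images need not be closed.\<close>

lemma polyhedral_cone_eventually_diff_mem:
  fixes M :: "'a::euclidean_space set"
  assumes "polyhedron M" "conic M" "e \<in> M"
    and mem: "\<And>n. c n *\<^sub>R q n \<in> M" and q: "q \<longlonglongrightarrow> e" and c: "\<forall>\<^sub>F n in sequentially. c n \<ge> 2"
  shows "\<forall>\<^sub>F n in sequentially. c n *\<^sub>R q n - e \<in> M"
proof -
  obtain H where H: "finite H" "M = \<Inter>H" "\<forall>h\<in>H. \<exists>a b. a \<noteq> 0 \<and> h = {x. a \<bullet> x \<le> b}"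
    using \<open>polyhedron M\<close> unfolding polyhedron_def by blast
  have "0 \<in> M" using conicD[OF \<open>conic M\<close> \<open>e \<in> M\<close>, of 0] by simp
  have "\<forall>\<^sub>F n in sequentially. c n *\<^sub>R q n - e \<in> h" if "h \<in> H" for h
  proof -
    obtain a b where h: "h = {x. a \<bullet> x \<le> b}" using H(3) \<open>h \<in> H\<close> by blast
    have "M \<subseteq> h" using H(2) \<open>h \<in> H\<close> by blast
    then have "b \<ge> 0" using \<open>0 \<in> M\<close> h by auto
    have "a \<bullet> e \<le> 0"
    proof (rule ccontr)
      assume "\<not> a \<bullet> e \<le> 0"
      then have "(b + 1) / (a \<bullet> e) \<ge> 0" using \<open>b \<ge> 0\<close> by simp
      then have "((b + 1) / (a \<bullet> e)) *\<^sub>R e \<in> h"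
        using \<open>M \<subseteq> h\<close> conicD[OF \<open>conic M\<close> \<open>e \<in> M\<close>] by blast
      with \<open>\<not> a \<bullet> e \<le> 0\<close> show False by (simp add: h)
    qed
    show ?thesis
    proof (cases "a \<bullet> e = 0")
      case True
      have "a \<bullet> (c n *\<^sub>R q n) \<le> b" for n using mem[of n] \<open>M \<subseteq> h\<close> h by blast
      with True show ?thesis by (simp add: h inner_diff_right)
    next
      case False
      with \<open>a \<bullet> e \<le> 0\<close> have "a \<bullet> e < a \<bullet> e / 2" by simp
      moreover have "(\<lambda>n. a \<bullet> q n) \<longlonglongrightarrow> a \<bullet> e" by (intro tendsto_intros q)
      ultimately have "\<forall>\<^sub>F n in sequentially. a \<bullet> q n < a \<bullet> e / 2"
        by (rule order_tendstoD(2)[rotated])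
      with c show ?thesis
      proof eventually_elim
        case (elim n)
        then have "a \<bullet> (c n *\<^sub>R q n) \<le> 2 * (a \<bullet> q n)"
          using \<open>a \<bullet> e \<le> 0\<close> by (simp add: mult_right_mono_neg)
        with elim \<open>b \<ge> 0\<close> show ?case by (simp add: h inner_diff_right)
      qed
    qed
  qed
  then have "\<forall>\<^sub>F n in sequentially. \<forall>h\<in>H. c n *\<^sub>R q n - e \<in> h"
    by (intro eventually_ball_finite[OF H(1)]) blast
  then show ?thesis by (rule eventually_mono) (simp add: H(2))
qed

lemma one_minus_norm_scaleR_inverse_one_plus_norm:
  fixes m :: "'a::real_normed_vector"
  shows "1 - norm ((1 / (1 + norm m)) *\<^sub>R m) = 1 / (1 + norm m)"
proof -
  have "1 + norm m > 0" by (simp add: add_pos_nonneg)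
  then show ?thesis by (simp add: field_simps)
qed

lemma inner_le_half_if_norm_le_norm_diff:
  fixes m e :: "'a::real_inner"
  assumes "norm m \<le> norm (m - e)" and "e \<bullet> e = 1"
  shows "m \<bullet> e \<le> 1 / 2"
proof -
  have "(norm m)\<^sup>2 \<le> (norm (m - e))\<^sup>2" using assms(1) by (rule power_mono) simp
  also have "\<dots> = (norm m)\<^sup>2 - 2 * (m \<bullet> e) + 1"
    using assms(2) by (simp add: power2_norm_eq_inner inner_diff_left inner_diff_right inner_commute)
  finally show ?thesis by simp
qed

text \<open>Minimal-norm preimages cannot escape to infinity in a direction \<open>e \<in> M\<close> with \<open>B e = 0\<close>:
  subtracting \<open>e\<close> would shorten them.\<close>

lemma min_norm_preimages_no_escape:
  fixes M :: "'a::euclidean_space set" and B :: "'a \<Rightarrow> 'b::euclidean_space"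
  assumes "polyhedron M" "conic M" "linear B"
    and mem: "\<And>n. c n *\<^sub>R q n \<in> M"
    and min: "\<And>n z. z \<in> M \<Longrightarrow> B z = B (c n *\<^sub>R q n) \<Longrightarrow> norm (c n *\<^sub>R q n) \<le> norm z"
    and q: "q \<longlonglongrightarrow> e" and "e \<in> M" "B e = 0" "norm e = 1"
    and c: "\<forall>\<^sub>F n in sequentially. c n \<ge> 2"
  shows False
proof -
  have "e \<bullet> e = 1" using \<open>norm e = 1\<close> by (simp add: dot_square_norm)
  have "\<forall>\<^sub>F n in sequentially. c n *\<^sub>R q n - e \<in> M"
    by (rule polyhedral_cone_eventually_diff_mem[OF assms(1,2) \<open>e \<in> M\<close> mem q c])
  moreover have "\<forall>\<^sub>F n in sequentially. q n \<bullet> e > 1 / 2"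
    using \<open>e \<bullet> e = 1\<close> by (intro order_tendstoD(1)[of "\<lambda>n. q n \<bullet> e" "e \<bullet> e"] tendsto_intros q) simp
  ultimately have "\<forall>\<^sub>F n in sequentially. False" using c
  proof eventually_elim
    case (elim n)
    have "B (c n *\<^sub>R q n - e) = B (c n *\<^sub>R q n)"
      using \<open>B e = 0\<close> linear_diff[OF \<open>linear B\<close>] by simp
    with elim(1) have "norm (c n *\<^sub>R q n) \<le> norm (c n *\<^sub>R q n - e)" by (rule min)
    then have "c n *\<^sub>R q n \<bullet> e \<le> 1 / 2"
      using \<open>e \<bullet> e = 1\<close> by (rule inner_le_half_if_norm_le_norm_diff)
    moreover have "1 \<le> c n * (q n \<bullet> e)"
      using elim mult_mono[of 2 "c n" "1/2" "q n \<bullet> e"] by simp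
    ultimately show False by simp
  qed
  then show False by simp
qed

lemma min_norm_preimages_normalized_limit:
  fixes M :: "'a::euclidean_space set" and B :: "'a \<Rightarrow> 'b::euclidean_space"
  assumes "polyhedron M" "conic M" "linear B"
    and \<mu>: "\<And>n. \<mu> n \<in> M" and \<mu>_min: "\<And>n z. z \<in> M \<Longrightarrow> B z = B (\<mu> n) \<Longrightarrow> norm (\<mu> n) \<le> norm z"
    and B\<mu>: "(\<lambda>n. B (\<mu> n)) \<longlonglongrightarrow> y" and q_lim: "(\<lambda>n. (1 / (1 + norm (\<mu> n))) *\<^sub>R \<mu> n) \<longlonglongrightarrow> e"
  shows "norm e < 1"
proof (rule ccontr)
  assume "\<not> norm e < 1"
  define c where "c n = 1 + norm (\<mu> n)" for n
  define q where "q n = (1 / c n) *\<^sub>R \<mu> n" for n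
  have c_pos: "c n > 0" for n by (simp add: c_def add_pos_nonneg)
  have \<mu>_eq: "\<mu> n = c n *\<^sub>R q n" for n using c_pos[of n] by (simp add: q_def)
  have q: "q \<longlonglongrightarrow> e" using q_lim by (simp add: q_def[abs_def] c_def)
  have "(\<lambda>n. 1 - norm (q n)) \<longlonglongrightarrow> 1 - norm e" by (intro tendsto_intros q)
  then have inv_c: "(\<lambda>n. 1 / c n) \<longlonglongrightarrow> 1 - norm e"
    unfolding q_def c_def one_minus_norm_scaleR_inverse_one_plus_norm .
  then have "0 \<le> 1 - norm e"
    using c_pos by (intro tendsto_lowerbound[OF inv_c always_eventually trivial_limit_sequentially])
      (simp add: less_imp_le)
  with \<open>\<not> norm e < 1\<close> have "norm e = 1" by simp
  have "q n \<in> M" for n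
    using conicD[OF \<open>conic M\<close> \<mu>] c_pos by (simp add: q_def less_imp_le)
  then have "e \<in> M" using closed_sequentially[OF polyhedron_imp_closed[OF \<open>polyhedron M\<close>] _ q] by blast
  have "(\<lambda>n. (1 / c n) *\<^sub>R B (\<mu> n)) \<longlonglongrightarrow> 0 *\<^sub>R y"
    using inv_c \<open>norm e = 1\<close> by (intro tendsto_intros B\<mu>) simp
  then have "(\<lambda>n. B (q n)) \<longlonglongrightarrow> 0" by (simp add: q_def linear_cmul[OF \<open>linear B\<close>])
  moreover have "(\<lambda>n. B (q n)) \<longlonglongrightarrow> B e"
    using \<open>linear B\<close> by (intro bounded_linear.tendsto[OF _ q]) (simp add: linear_conv_bounded_linear)
  ultimately have "B e = 0" using LIMSEQ_unique by fastforce
  have "\<forall>\<^sub>F n in sequentially. 1 / c n < 1 / 2"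
    using \<open>norm e = 1\<close> by (intro order_tendstoD(2)[OF inv_c]) simp
  then have c_big: "\<forall>\<^sub>F n in sequentially. c n \<ge> 2"
    by (rule eventually_mono) (use c_pos in \<open>simp add: divide_less_eq\<close>)
  have mem: "c n *\<^sub>R q n \<in> M" for n using \<mu>[of n] by (simp flip: \<mu>_eq)
  have min: "norm (c n *\<^sub>R q n) \<le> norm z" if "z \<in> M" "B z = B (c n *\<^sub>R q n)" for n z
    using \<mu>_min that by (simp flip: \<mu>_eq)
  show False
    by (rule min_norm_preimages_no_escape[OF assms(1-3) mem min q \<open>e \<in> M\<close> \<open>B e = 0\<close> \<open>norm e = 1\<close> c_big])
qed

lemma closed_linear_image_polyhedral_cone:
  fixes M :: "'a::euclidean_space set" and B :: "'a \<Rightarrow> 'b::euclidean_space"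
  assumes "polyhedron M" "conic M" "linear B"
  shows "closed (B ` M)"
  unfolding closed_sequential_limits
proof (intro allI impI, elim conjE)
  fix ys y assume ys: "\<forall>n. ys n \<in> B ` M" "ys \<longlonglongrightarrow> y"
  have "closed M" using \<open>polyhedron M\<close> by (rule polyhedron_imp_closed)
  have "\<exists>\<mu>. \<mu> \<in> M \<and> B \<mu> = ys n \<and> (\<forall>z\<in>M. B z = ys n \<longrightarrow> norm \<mu> \<le> norm z)" for n
    using linear_preimage_min_norm[OF \<open>closed M\<close> \<open>linear B\<close> ys(1)[rule_format]] .
  then obtain \<mu> where \<mu>: "\<And>n. \<mu> n \<in> M" "\<And>n. B (\<mu> n) = ys n"
    and \<mu>_min: "\<And>n z. z \<in> M \<Longrightarrow> B z = ys n \<Longrightarrow> norm (\<mu> n) \<le> norm z"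
    by metis
  define q where "q n = (1 / (1 + norm (\<mu> n))) *\<^sub>R \<mu> n" for n
  have "norm (q n) \<le> 1" for n
    using one_minus_norm_scaleR_inverse_one_plus_norm[of "\<mu> n"] unfolding q_def
    by (smt (verit) add_pos_nonneg divide_pos_pos norm_ge_zero zero_less_one)
  then have "bounded (range q)" by (intro boundedI[of _ 1]) auto
  from bounded_imp_convergent_subsequence[OF this]
  obtain e r where r: "strict_mono r" and "(q \<circ> r) \<longlonglongrightarrow> e" by blast
  then have qr: "(\<lambda>n. q (r n)) \<longlonglongrightarrow> e" by (simp add: o_def)
  have ysr: "(\<lambda>n. B (\<mu> (r n))) \<longlonglongrightarrow> y"
    using LIMSEQ_subseq_LIMSEQ[OF ys(2) r] by (simp add: \<mu> o_def)
  have "norm e < 1"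
    using \<mu>(1) \<mu>_min \<mu>(2) ysr qr unfolding q_def
    by (intro min_norm_preimages_normalized_limit[OF assms, of "\<lambda>n. \<mu> (r n)" y]) auto
  have "(\<lambda>n. (1 / (1 - norm (q (r n)))) *\<^sub>R q (r n)) \<longlonglongrightarrow> (1 / (1 - norm e)) *\<^sub>R e"
    using \<open>norm e < 1\<close> by (intro tendsto_intros qr) simp
  moreover have "(1 / (1 - norm (q n))) *\<^sub>R q n = \<mu> n" for n
    using add_pos_nonneg[OF zero_less_one norm_ge_zero, of "\<mu> n"]
    unfolding q_def one_minus_norm_scaleR_inverse_one_plus_norm by simp
  ultimately have lim: "(\<lambda>n. \<mu> (r n)) \<longlonglongrightarrow> (1 / (1 - norm e)) *\<^sub>R e" by simp
  then have "(1 / (1 - norm e)) *\<^sub>R e \<in> M"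
    using closed_sequentially[OF \<open>closed M\<close> _ lim] \<mu>(1) by blast
  moreover have "(\<lambda>n. B (\<mu> (r n))) \<longlonglongrightarrow> B ((1 / (1 - norm e)) *\<^sub>R e)"
    using \<open>linear B\<close> by (intro bounded_linear.tendsto[OF _ lim]) (simp add: linear_conv_bounded_linear)
  then have "B ((1 / (1 - norm e)) *\<^sub>R e) = y" using ysr by (rule LIMSEQ_unique)
  ultimately show "y \<in> B ` M" by blast
qed

section \<open>Locally polyhedral sets\<close>

lemma eventually_active_constraint_orthogonal:
  fixes a z :: "'a::real_inner"
  assumes t: "\<And>k. t k > 0" "t \<longlonglongrightarrow> 0" and w: "w \<longlonglongrightarrow> w\<^sub>0"
  shows "\<forall>\<^sub>F k in sequentially. a \<bullet> (z + t k *\<^sub>R w k) = b \<longrightarrow> a \<bullet> w k = 0 \<and> a \<bullet> w\<^sub>0 = 0"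
proof (cases "a \<bullet> z = b")
  case False
  have "(\<lambda>k. a \<bullet> (z + t k *\<^sub>R w k)) \<longlonglongrightarrow> a \<bullet> (z + 0 *\<^sub>R w\<^sub>0)" by (intro tendsto_intros t w)
  with False have "\<forall>\<^sub>F k in sequentially. a \<bullet> (z + t k *\<^sub>R w k) \<noteq> b"
    by (intro tendsto_imp_eventually_ne) simp_all
  then show ?thesis by (rule eventually_mono) simp
next
  case True
  then have active_iff: "a \<bullet> (z + t k *\<^sub>R w k) = b \<longleftrightarrow> a \<bullet> w k = 0" for k
    using t(1)[of k] by (simp add: inner_add_right)
  show ?thesis
  proof (cases "a \<bullet> w\<^sub>0 = 0")
    case False
    have "(\<lambda>k. a \<bullet> w k) \<longlonglongrightarrow> a \<bullet> w\<^sub>0" by (intro tendsto_intros w)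
    then have "\<forall>\<^sub>F k in sequentially. a \<bullet> w k \<noteq> 0" using False by (rule tendsto_imp_eventually_ne)
    then show ?thesis by (rule eventually_mono) (simp add: active_iff)
  qed (simp add: active_iff)
qed

locale polyhedral_near =
  fixes D :: "'a::euclidean_space set" and z :: 'a and r :: real
    and F :: "'a set set" and C :: "'a set \<Rightarrow> ('a \<times> real) set"
  assumes radius_pos: "r > 0"
    and finite_pieces: "finite F"
    and finite_constraints: "\<And>P. P \<in> F \<Longrightarrow> finite (C P)"
    and piece_eq: "\<And>P. P \<in> F \<Longrightarrow> P = {x. \<forall>c\<in>C P. fst c \<bullet> x \<le> snd c}"
    and piece_subset: "\<And>P. P \<in> F \<Longrightarrow> P \<subseteq> D"
    and pieces_cover: "D \<inter> ball z r \<subseteq> \<Union>F"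
begin

definition active_normals :: "'a set \<Rightarrow> 'a \<Rightarrow> 'a set" where
  "active_normals P d = fst ` {c \<in> C P. fst c \<bullet> d = snd c}"

lemma finite_active_normals: "P \<in> F \<Longrightarrow> finite (active_normals P d)"
  unfolding active_normals_def using finite_constraints by simp

lemma active_normals_subset: "active_normals P d \<subseteq> fst ` C P"
  unfolding active_normals_def by blast

lemma piece_eq_Inter: "P \<in> F \<Longrightarrow> P = (\<Inter>c\<in>C P. {x. fst c \<bullet> x \<le> snd c})"
  using piece_eq by blast

lemma piece_closed: "P \<in> F \<Longrightarrow> closed P"
  by (subst piece_eq_Inter) (auto intro!: closed_INT closed_halfspace_le)

lemma piece_convex: "P \<in> F \<Longrightarrow> convex P"
  by (subst piece_eq_Inter) (auto intro!: convex_INT convex_halfspace_le)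

lemma active_normals_inner_nonpos:
  assumes "P \<in> F" "d \<in> P" "p \<in> P" "a \<in> active_normals P d"
  shows "a \<bullet> (p - d) \<le> 0"
proof -
  obtain c where "c \<in> C P" "a = fst c" "fst c \<bullet> d = snd c"
    using assms(4) unfolding active_normals_def by blast
  moreover have "fst c \<bullet> p \<le> snd c" using \<open>c \<in> C P\<close> \<open>p \<in> P\<close> piece_eq[OF \<open>P \<in> F\<close>] by blast
  ultimately show ?thesis by (simp add: inner_diff_right)
qed

lemma feasible_direction:
  assumes "P \<in> F" "d \<in> P" and v: "\<forall>a\<in>active_normals P d. a \<bullet> v \<le> 0"
  shows "\<exists>\<tau>>0. d + \<tau> *\<^sub>R v \<in> P"
proof -
  have "\<forall>\<^sub>F \<tau> in at_right 0. fst c \<bullet> (d + \<tau> *\<^sub>R v) \<le> snd c" if "c \<in> C P" for c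
  proof (cases "fst c \<bullet> d = snd c")
    case True
    then have "fst c \<bullet> v \<le> 0" using v that unfolding active_normals_def by blast
    show ?thesis using eventually_at_right_less[of "0::real"]
    proof (rule eventually_mono)
      fix \<tau> :: real assume "0 < \<tau>"
      with \<open>fst c \<bullet> v \<le> 0\<close> have "\<tau> * (fst c \<bullet> v) \<le> 0" by (simp add: mult_nonneg_nonpos)
      with True show "fst c \<bullet> (d + \<tau> *\<^sub>R v) \<le> snd c" by (simp add: inner_add_right)
    qed
  next
    case False
    moreover have "fst c \<bullet> d \<le> snd c" using \<open>d \<in> P\<close> that piece_eq[OF \<open>P \<in> F\<close>] by blast
    ultimately have "fst c \<bullet> d < snd c" by simp
    moreover have "((\<lambda>\<tau>. fst c \<bullet> (d + \<tau> *\<^sub>R v)) \<longlongrightarrow> fst c \<bullet> (d + 0 *\<^sub>R v)) (at_right 0)"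
      by (intro tendsto_intros)
    ultimately have "\<forall>\<^sub>F \<tau> in at_right 0. fst c \<bullet> (d + \<tau> *\<^sub>R v) < snd c"
      by (intro order_tendstoD(2)) simp_all
    then show ?thesis by (rule eventually_mono) simp
  qed
  then have "\<forall>\<^sub>F \<tau> in at_right 0. (\<forall>c\<in>C P. fst c \<bullet> (d + \<tau> *\<^sub>R v) \<le> snd c) \<and> 0 < \<tau>"
    by (intro eventually_conj eventually_ball_finite finite_constraints[OF \<open>P \<in> F\<close>]
        eventually_at_right_less) blast
  then obtain \<tau> :: real where "\<forall>c\<in>C P. fst c \<bullet> (d + \<tau> *\<^sub>R v) \<le> snd c" "\<tau> > 0"
    using eventually_happens'[OF trivial_limit_at_right_real] by blast
  then show ?thesis using piece_eq[OF \<open>P \<in> F\<close>] by blast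
qed

lemma reg_normal_inner_nonpos_active:
  assumes \<eta>: "\<eta> \<in> reg_normal D d" and "P \<in> F" "d \<in> P"
    and v: "\<forall>a\<in>active_normals P d. a \<bullet> v \<le> 0"
  shows "\<eta> \<bullet> v \<le> 0"
proof -
  obtain \<tau> where "\<tau> > 0" "d + \<tau> *\<^sub>R v \<in> P"
    using feasible_direction[OF \<open>P \<in> F\<close> \<open>d \<in> P\<close> v] by blast
  moreover have "\<eta> \<in> reg_normal P d"
    using reg_normal_subset[OF \<eta> piece_subset[OF \<open>P \<in> F\<close>] \<open>d \<in> P\<close>] .
  ultimately have "\<tau> * (\<eta> \<bullet> v) \<le> 0"
    using reg_normal_convex_inner_nonpos[OF piece_convex[OF \<open>P \<in> F\<close>]] by fastforce
  with \<open>\<tau> > 0\<close> show ?thesis by (simp add: mult_le_0_iff)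
qed

lemma eventually_common_piece:
  assumes "d \<in> D \<inter> ball z r"
  shows "\<forall>\<^sub>F d' in nhds d. d' \<in> D \<longrightarrow> (\<exists>P\<in>F. d \<in> P \<and> d' \<in> P)"
proof -
  have "\<forall>\<^sub>F d' in nhds d. \<forall>P\<in>{P\<in>F. d \<notin> P}. d' \<in> - P"
    using finite_pieces piece_closed
    by (intro eventually_ball_finite ballI eventually_nhds_in_open) auto
  moreover have "\<forall>\<^sub>F d' in nhds d. d' \<in> ball z r"
    using assms by (intro eventually_nhds_in_open) auto
  ultimately show ?thesis
  proof eventually_elim
    case (elim d')
    show ?case
    proof
      assume "d' \<in> D"
      with elim(2) pieces_cover obtain P where "P \<in> F" "d' \<in> P" by blast
      with elim(1) show "\<exists>P\<in>F. d \<in> P \<and> d' \<in> P" by blast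
    qed
  qed
qed

lemma reg_normal_near_eq:
  assumes "d \<in> D \<inter> ball z r"
  shows "reg_normal D d = (\<Inter>P\<in>{P\<in>F. d \<in> P}. convex_cone hull active_normals P d)"
proof
  show "reg_normal D d \<subseteq> (\<Inter>P\<in>{P\<in>F. d \<in> P}. convex_cone hull active_normals P d)"
    using reg_normal_inner_nonpos_active
    by (auto simp: farkas_convex_cone_hull[OF finite_active_normals])
next
  show "(\<Inter>P\<in>{P\<in>F. d \<in> P}. convex_cone hull active_normals P d) \<subseteq> reg_normal D d"
  proof
    fix l assume "l \<in> (\<Inter>P\<in>{P\<in>F. d \<in> P}. convex_cone hull active_normals P d)"
    then have polar: "l \<bullet> v \<le> 0" if "P \<in> F" "d \<in> P" "\<forall>a\<in>active_normals P d. a \<bullet> v \<le> 0" for P v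
      using that by (auto simp: farkas_convex_cone_hull[OF finite_active_normals])
    have "\<forall>\<^sub>F d' in nhds d. d' \<in> D \<longrightarrow> l \<bullet> (d' - d) \<le> \<epsilon> * norm (d' - d)" if "\<epsilon> > 0" for \<epsilon>
      using eventually_common_piece[OF assms]
    proof (rule eventually_mono, intro impI)
      fix d' assume "d' \<in> D \<longrightarrow> (\<exists>P\<in>F. d \<in> P \<and> d' \<in> P)" "d' \<in> D"
      then obtain P where "P \<in> F" "d \<in> P" "d' \<in> P" by blast
      then have "l \<bullet> (d' - d) \<le> 0"
        using active_normals_inner_nonpos by (intro polar) auto
      with \<open>\<epsilon> > 0\<close> show "l \<bullet> (d' - d) \<le> \<epsilon> * norm (d' - d)" by (smt (verit) mult_nonneg_nonneg norm_ge_zero)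
    qed
    then show "l \<in> reg_normal D d"
      using assms unfolding reg_normal_iff_eventually by blast
  qed
qed

lemma polyhedron_reg_normal_near: "d \<in> D \<inter> ball z r \<Longrightarrow> polyhedron (reg_normal D d)"
  using finite_pieces
  by (auto simp: reg_normal_near_eq finite_active_normals polyhedron_convex_cone_hull
      intro!: polyhedron_Inter)

text \<open>The regular normal cone near \<open>z\<close> is an intersection of cones generated by sets of
  constraint normals, so only finitely many cones occur.\<close>

lemma finite_reg_normals_near: "finite (reg_normal D ` (D \<inter> ball z r))"
proof -
  define K where "K = (\<Union>P\<in>F. (\<lambda>G. convex_cone hull G) ` Pow (fst ` C P))"
  have "finite K" unfolding K_def using finite_pieces finite_constraints by auto
  have "reg_normal D d \<in> Inter ` Pow K" if "d \<in> D \<inter> ball z r" for d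
  proof
    show "reg_normal D d = \<Inter> ((\<lambda>P. convex_cone hull active_normals P d) ` {P\<in>F. d \<in> P})"
      using reg_normal_near_eq[OF that] by simp
    show "(\<lambda>P. convex_cone hull active_normals P d) ` {P\<in>F. d \<in> P} \<in> Pow K"
      using active_normals_subset by (auto simp: K_def)
  qed
  then have "reg_normal D ` (D \<inter> ball z r) \<subseteq> Inter ` Pow K" by blast
  then show ?thesis by (rule finite_subset) (simp add: \<open>finite K\<close>)
qed

lemma reg_normal_common_limit:
  fixes B :: "'a \<Rightarrow> 'b::euclidean_space"
  assumes d: "\<And>k. d k \<in> D" "d \<longlonglongrightarrow> z" and \<eta>: "\<And>k. \<eta> k \<in> reg_normal D (d k)"
    and "linear B" and B\<eta>: "(\<lambda>k. B (\<eta> k)) \<longlonglongrightarrow> \<xi>"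
  shows "\<exists>l (\<rho>::nat \<Rightarrow> nat). strict_mono \<rho> \<and> (\<forall>n. l \<in> reg_normal D (d (\<rho> n))) \<and> B l = \<xi>"
proof -
  have "\<forall>\<^sub>F k in sequentially. d k \<in> ball z r"
    using d(2) radius_pos by (intro topological_tendstoD) auto
  then obtain N where N: "\<And>k. k \<ge> N \<Longrightarrow> d k \<in> ball z r" unfolding eventually_sequentially by blast
  have "(\<lambda>k. reg_normal D (d k)) ` {N..} \<subseteq> reg_normal D ` (D \<inter> ball z r)"
    using N d(1) by auto
  then have "finite ((\<lambda>k. reg_normal D (d k)) ` {N..})"
    using finite_reg_normals_near finite_subset by blast
  then obtain k\<^sub>0 where "k\<^sub>0 \<in> {N..}"
    and "infinite {k \<in> {N..}. reg_normal D (d k) = reg_normal D (d k\<^sub>0)}"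
    using pigeonhole_infinite[OF infinite_Ici] by blast
  then obtain \<rho> :: "nat \<Rightarrow> nat" where \<rho>: "strict_mono \<rho>"
    and "\<And>n. \<rho> n \<in> {k \<in> {N..}. reg_normal D (d k) = reg_normal D (d k\<^sub>0)}"
    using infinite_enumerate by blast
  then have same: "reg_normal D (d (\<rho> n)) = reg_normal D (d k\<^sub>0)" for n by blast
  have "d k\<^sub>0 \<in> D \<inter> ball z r" using N d(1) \<open>k\<^sub>0 \<in> {N..}\<close> by auto
  then have "closed (B ` reg_normal D (d k\<^sub>0))"
    using closed_linear_image_polyhedral_cone[OF polyhedron_reg_normal_near conic_reg_normal \<open>linear B\<close>]
    by blast
  moreover have "B (\<eta> (\<rho> n)) \<in> B ` reg_normal D (d k\<^sub>0)" for n
    using \<eta>[of "\<rho> n"] same[of n] by simp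
  moreover have "(\<lambda>n. B (\<eta> (\<rho> n))) \<longlonglongrightarrow> \<xi>"
    using LIMSEQ_subseq_LIMSEQ[OF B\<eta> \<rho>] by (simp add: o_def)
  ultimately have "\<xi> \<in> B ` reg_normal D (d k\<^sub>0)"
    by (rule closed_sequentially)
  then obtain l where "l \<in> reg_normal D (d k\<^sub>0)" "B l = \<xi>" by blast
  with \<rho> same show ?thesis by (intro exI[of _ l] exI[of _ \<rho>]) simp
qed

lemma eventually_normal_orthogonal:
  assumes d: "\<And>k. z + t k *\<^sub>R w k \<in> D" and t: "\<And>k. t k > 0" "t \<longlonglongrightarrow> 0" and w: "w \<longlonglongrightarrow> w\<^sub>0"
    and \<eta>: "\<And>k. \<eta> k \<in> reg_normal D (z + t k *\<^sub>R w k)"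
  shows "\<forall>\<^sub>F k in sequentially. \<eta> k \<bullet> w k = 0 \<and> \<eta> k \<bullet> w\<^sub>0 = 0"
proof -
  have "\<forall>\<^sub>F k in sequentially. \<forall>(P, c)\<in>Sigma F C.
      fst c \<bullet> (z + t k *\<^sub>R w k) = snd c \<longrightarrow> fst c \<bullet> w k = 0 \<and> fst c \<bullet> w\<^sub>0 = 0"
    using finite_pieces finite_constraints
    by (intro eventually_ball_finite) (auto intro: eventually_active_constraint_orthogonal[OF t w])
  moreover have "(\<lambda>k. z + t k *\<^sub>R w k) \<longlonglongrightarrow> z + 0 *\<^sub>R w\<^sub>0" by (intro tendsto_intros t w)
  then have "\<forall>\<^sub>F k in sequentially. z + t k *\<^sub>R w k \<in> ball z r"
    using radius_pos by (intro topological_tendstoD) auto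
  ultimately show ?thesis
  proof eventually_elim
    case (elim k)
    with d[of k] pieces_cover obtain P where "P \<in> F" "z + t k *\<^sub>R w k \<in> P" by blast
    have "\<forall>a\<in>active_normals P (z + t k *\<^sub>R w k). a \<bullet> w k = 0 \<and> a \<bullet> w\<^sub>0 = 0"
      using elim(1) \<open>P \<in> F\<close> unfolding active_normals_def by fastforce
    then have "\<eta> k \<bullet> v \<le> 0" if "v \<in> {w k, - w k, w\<^sub>0, - w\<^sub>0}" for v
      using that \<open>P \<in> F\<close> \<open>z + t k *\<^sub>R w k \<in> P\<close>
      by (intro reg_normal_inner_nonpos_active[OF \<eta>]) auto
    from this[of "w k"] this[of "- w k"] this[of "w\<^sub>0"] this[of "- w\<^sub>0"] show ?case by simp
  qed
qed

end

lemma ball_subset_cbox_One: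
  fixes z :: "'a::euclidean_space"
  shows "ball z r \<subseteq> cbox (z - r *\<^sub>R One) (z + r *\<^sub>R One)"
proof
  fix x assume "x \<in> ball z r"
  then have "norm (x - z) < r" by (simp add: dist_norm norm_minus_commute)
  moreover have "\<bar>(x - z) \<bullet> i\<bar> \<le> norm (x - z)" if "i \<in> Basis" for i
    using Basis_le_norm[OF that] by simp
  ultimately show "x \<in> cbox (z - r *\<^sub>R One) (z + r *\<^sub>R One)"
    unfolding mem_box by (fastforce simp: inner_diff_left inner_add_left abs_less_iff)
qed

lemma locally_polyhedral_obtain:
  assumes "locally_polyhedral D z"
  obtains r F C where "polyhedral_near D z r F C"
proof -
  obtain r F where "r > 0" "finite F" and poly: "\<forall>P\<in>F. polyhedron P"
    and D_eq: "D \<inter> cbox (z - r *\<^sub>R One) (z + r *\<^sub>R One) = \<Union>F"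
    using assms unfolding locally_polyhedral_def by blast
  have "\<forall>P\<in>F. \<exists>C. finite C \<and> P = {x. \<forall>c\<in>C. fst c \<bullet> x \<le> snd c}"
  proof
    fix P assume "P \<in> F"
    then obtain C where "finite C" "P = {x. \<forall>c\<in>C. fst c \<bullet> x \<le> snd c}"
      using poly polyhedron_obtain_inequalities by blast
    then show "\<exists>C. finite C \<and> P = {x. \<forall>c\<in>C. fst c \<bullet> x \<le> snd c}" by blast
  qed
  from bchoice[OF this] obtain C where C: "\<forall>P\<in>F. finite (C P) \<and> P = {x. \<forall>c\<in>C P. fst c \<bullet> x \<le> snd c}"
    by blast
  have "polyhedral_near D z r F C"
  proof
    show "D \<inter> ball z r \<subseteq> \<Union>F" using D_eq ball_subset_cbox_One by blast
  qed (use \<open>r > 0\<close> \<open>finite F\<close> C D_eq in auto)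
  then show thesis by (rule that)
qed

section \<open>The sequences in the definition of strong asymptotic regularity\<close>

lemma eventually_inner_pos_if_directions_converge:
  fixes a b :: "nat \<Rightarrow> 'a::real_inner"
  assumes a: "\<And>k. a k \<noteq> 0" and b: "\<forall>\<^sub>F k in sequentially. b k \<noteq> 0"
    and directions: "(\<lambda>k. (1 / norm (a k)) *\<^sub>R a k - (1 / norm (b k)) *\<^sub>R b k) \<longlonglongrightarrow> 0"
  shows "\<forall>\<^sub>F k in sequentially. a k \<bullet> b k > 0"
proof -
  define p where "p k = (1 / norm (a k)) *\<^sub>R a k" for k
  define q where "q k = (1 / norm (b k)) *\<^sub>R b k" for k
  have "(\<lambda>k. 1 - (norm (p k - q k))\<^sup>2 / 2) \<longlonglongrightarrow> 1 - 0\<^sup>2 / 2"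
    using directions unfolding p_def q_def by (intro tendsto_intros) (simp_all add: tendsto_norm_zero_iff)
  then have "\<forall>\<^sub>F k in sequentially. 1 - (norm (p k - q k))\<^sup>2 / 2 > 0"
    by (rule order_tendstoD(1)) simp
  with b show ?thesis
  proof eventually_elim
    case (elim k)
    have "norm (p k) = 1" "norm (q k) = 1" using a[of k] elim(1) by (simp_all add: p_def q_def)
    then have "1 - (norm (p k - q k))\<^sup>2 / 2 = p k \<bullet> q k"
      by (simp add: power2_norm_eq_inner inner_diff_left inner_diff_right inner_commute)
        (simp add: dot_square_norm field_simps)
    with elim have "p k \<bullet> q k > 0" by simp
    moreover have "a k \<bullet> b k = (norm (a k) * norm (b k)) * (p k \<bullet> q k)"
      using a[of k] elim(1) by (simp add: p_def q_def)
    ultimately show ?case using a[of k] elim(1) by simp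
  qed
qed

text \<open>The hypotheses of \<^const>\<open>strongly_asymp_regular_dir\<close> for \<open>\<Phi> x = g x - D\<close>, with
  \<open>0 \<notin> \<Phi> (x k)\<close> weakened to \<open>x k \<noteq> xbar\<close>.\<close>

locale asymptotic_sequence =
  fixes g :: "'a::euclidean_space \<Rightarrow> 'b::euclidean_space"
    and g' :: "'a \<Rightarrow> 'a \<Rightarrow>\<^sub>L 'b" and g'' :: "'a \<Rightarrow> 'a \<Rightarrow>\<^sub>L 'a \<Rightarrow>\<^sub>L 'b"
    and D :: "'b set" and xbar u :: 'a
    and x :: "nat \<Rightarrow> 'a" and y :: "nat \<Rightarrow> 'b" and xs :: "nat \<Rightarrow> 'a" and lam :: "nat \<Rightarrow> 'b"
    and xstar :: 'a
  assumes g_deriv: "\<And>x. (g has_derivative g' x) (at x)"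
    and g'_deriv: "\<And>x. (g' has_derivative g'' x) (at x)"
    and g''_cont: "isCont g'' xbar"
    and normal: "\<And>k. (xs k, - lam k) \<in> reg_normal {(x, y). g x - y \<in> D} (x k, y k)"
    and x_ne: "\<And>k. x k \<noteq> xbar" and y_ne: "\<And>k. y k \<noteq> 0"
    and x_lim: "x \<longlonglongrightarrow> xbar" and xs_lim: "xs \<longlonglongrightarrow> xstar"
    and direction_lim: "(\<lambda>k. (1 / norm (x k - xbar)) *\<^sub>R (x k - xbar)) \<longlonglongrightarrow> u"
    and y_rate: "(\<lambda>k. (1 / norm (x k - xbar)) *\<^sub>R y k) \<longlonglongrightarrow> 0"
    and lam_unbounded: "filterlim (\<lambda>k. norm (lam k)) at_top sequentially"
    and aligned: "(\<lambda>k. (1 / norm (y k)) *\<^sub>R y k - (1 / norm (lam k)) *\<^sub>R lam k) \<longlonglongrightarrow> 0"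
begin

definition t :: "nat \<Rightarrow> real" where "t k = norm (x k - xbar)"
definition v :: "nat \<Rightarrow> 'a" where "v k = (1 / t k) *\<^sub>R (x k - xbar)"
definition s :: "nat \<Rightarrow> real" where "s k = norm (lam k)"
definition \<nu> :: "nat \<Rightarrow> 'b" where "\<nu> k = (1 / s k) *\<^sub>R lam k"
definition d :: "nat \<Rightarrow> 'b" where "d k = g (x k) - y k"
definition w :: "nat \<Rightarrow> 'b" where "w k = (1 / t k) *\<^sub>R (d k - g xbar)"

lemma t_pos: "t k > 0"
  using x_ne[of k] by (simp add: t_def)

lemma t_lim: "t \<longlonglongrightarrow> 0"
  using tendsto_norm[OF LIM_zero[OF x_lim]] by (simp add: t_def[abs_def])

lemma v_lim: "v \<longlonglongrightarrow> u"
  using direction_lim by (simp add: v_def[abs_def] t_def[abs_def])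

lemma x_eq: "x k = xbar + t k *\<^sub>R v k"
  using t_pos[of k] by (simp add: v_def)

lemma d_eq: "d k = g xbar + t k *\<^sub>R w k"
  using t_pos[of k] by (simp add: w_def)

lemma lam_normal: "lam k \<in> reg_normal D (d k)"
  unfolding d_def using normal by (rule reg_normal_constraint_setD)

lemma d_mem: "d k \<in> D"
  using lam_normal by (rule reg_normal_memD)

lemma xs_eq: "xs k = adjoint (g' (x k)) (lam k)"
  using normal g_deriv by (rule reg_normal_constraint_set_adjoint)

lemma g_quotient_lim: "(\<lambda>k. (1 / t k) *\<^sub>R (g (x k) - g xbar)) \<longlonglongrightarrow> g' xbar u"
  using t_pos t_lim v_lim unfolding v_def
  by (intro tendsto_difference_quotient_sequentially[OF g_deriv]) auto

lemma g'_quotient_lim: "(\<lambda>k. (1 / t k) *\<^sub>R (g' (x k) - g' xbar)) \<longlonglongrightarrow> g'' xbar u"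
  using t_pos t_lim v_lim unfolding v_def
  by (intro tendsto_difference_quotient_sequentially[OF g'_deriv]) auto

lemma w_lim: "w \<longlonglongrightarrow> g' xbar u"
proof -
  have "(\<lambda>k. (1 / t k) *\<^sub>R (g (x k) - g xbar) - (1 / t k) *\<^sub>R y k) \<longlonglongrightarrow> g' xbar u - 0"
    using y_rate by (intro tendsto_intros g_quotient_lim) (simp add: t_def[abs_def])
  then show ?thesis by (simp add: w_def[abs_def] d_def algebra_simps)
qed

lemma d_lim: "d \<longlonglongrightarrow> g xbar"
proof -
  have "(\<lambda>k. g xbar + t k *\<^sub>R w k) \<longlonglongrightarrow> g xbar + 0 *\<^sub>R g' xbar u"
    by (intro tendsto_intros t_lim w_lim)
  then show ?thesis by (simp add: d_eq[abs_def])
qed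

lemma g'_lim: "(\<lambda>k. g' (x k)) \<longlonglongrightarrow> g' xbar"
  using isCont_tendsto_compose[OF has_derivative_continuous[OF g'_deriv] x_lim] .

lemma adjoint_g'_lim: "(\<lambda>k. adjoint (g' (x k)) l) \<longlonglongrightarrow> adjoint (g' xbar) l"
proof -
  have "(\<lambda>k. norm (g' (x k) - g' xbar) * norm l) \<longlonglongrightarrow> norm (g' xbar - g' xbar) * norm l"
    by (intro tendsto_intros g'_lim)
  then have bound_lim: "(\<lambda>k. norm (g' (x k) - g' xbar) * norm l) \<longlonglongrightarrow> 0" by simp
  have "\<forall>\<^sub>F k in sequentially.
      norm (adjoint (g' (x k)) l - adjoint (g' xbar) l) \<le> norm (g' (x k) - g' xbar) * norm l"
    by (intro always_eventually allI norm_adjoint_diff_le)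
  from Lim_null_comparison[OF this bound_lim]
  have "(\<lambda>k. adjoint (g' (x k)) l - adjoint (g' xbar) l) \<longlonglongrightarrow> 0" .
  then show ?thesis by (simp add: LIM_zero_iff)
qed

lemma s_pos_eventually: "\<forall>\<^sub>F k in sequentially. s k > 0"
proof -
  have "\<forall>\<^sub>F k in sequentially. 1 \<le> norm (lam k)"
    using lam_unbounded unfolding filterlim_at_top by blast
  then show ?thesis by (rule eventually_mono) (unfold s_def, linarith)
qed

lemma inv_s_lim: "(\<lambda>k. 1 / s k) \<longlonglongrightarrow> 0"
  using tendsto_inverse_0_at_top[OF lam_unbounded] by (simp add: s_def[abs_def] divide_inverse)

lemma \<nu>_norm_eventually: "\<forall>\<^sub>F k in sequentially. norm (\<nu> k) = 1"
  using s_pos_eventually by (rule eventually_mono) (simp add: \<nu>_def s_def)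

lemma \<nu>_norm_le: "norm (\<nu> k) \<le> 1"
  by (cases "lam k = 0") (simp_all add: \<nu>_def s_def)

lemma \<nu>_normal: "\<nu> k \<in> reg_normal D (d k)"
  unfolding \<nu>_def using conic_reg_normal lam_normal by (rule conicD) (simp add: s_def)

lemma lam_inner_y_nonneg: "\<forall>\<^sub>F k in sequentially. lam k \<bullet> y k \<ge> 0"
proof -
  have "\<forall>\<^sub>F k in sequentially. lam k \<noteq> 0"
    using s_pos_eventually by (rule eventually_mono) (simp add: s_def)
  then have "\<forall>\<^sub>F k in sequentially. y k \<bullet> lam k > 0"
    using eventually_inner_pos_if_directions_converge[OF y_ne _ aligned] by blast
  then show ?thesis by (rule eventually_mono) (simp add: inner_commute)
qed

definition taylor_rem :: "nat \<Rightarrow> 'b" where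
  "taylor_rem k = g (x k) - g xbar - g' (x k) (x k - xbar) + (1/2) *\<^sub>R g'' xbar (x k - xbar) (x k - xbar)"

lemma taylor_rem_lim: "(\<lambda>k. norm (taylor_rem k) / (t k)\<^sup>2) \<longlonglongrightarrow> 0"
proof -
  have "filterlim x (at xbar) sequentially"
    using x_lim x_ne by (simp add: filterlim_at)
  from filterlim_compose[OF second_order_remainder_tendsto[OF g_deriv g'_deriv g''_cont] this]
  show ?thesis by (simp add: taylor_rem_def t_def)
qed

lemma \<nu>_limit:
  assumes \<nu>_lim: "\<nu> \<longlonglongrightarrow> \<eta>"
  shows "\<eta> \<in> dir_lim_normal D (g xbar) (g' xbar u)"
    and "adjoint (g' xbar) \<eta> = 0"
    and "norm \<eta> = 1"
proof -
  show "\<eta> \<in> dir_lim_normal D (g xbar) (g' xbar u)"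
    unfolding dir_lim_normal_def
    using t_pos t_lim w_lim \<nu>_lim \<nu>_normal by (intro CollectI exI[of _ t] exI[of _ w] exI[of _ \<nu>]) (simp add: d_eq)
  have "g' xbar h \<bullet> \<eta> = 0" for h
  proof -
    have "(\<lambda>k. g' (x k) h) \<longlonglongrightarrow> g' xbar h"
      by (rule bounded_bilinear.tendsto[OF bounded_bilinear_blinfun_apply g'_lim tendsto_const])
    then have "(\<lambda>k. g' (x k) h \<bullet> \<nu> k) \<longlonglongrightarrow> g' xbar h \<bullet> \<eta>"
      using \<nu>_lim by (rule tendsto_inner)
    moreover have "g' (x k) h \<bullet> \<nu> k = (1 / s k) * (h \<bullet> xs k)" for k
      using adjoint_works[OF linear_blinfun_apply[of "g' (x k)"], of h "lam k"]
      by (simp add: \<nu>_def xs_eq)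
    moreover have "(\<lambda>k. (1 / s k) * (h \<bullet> xs k)) \<longlonglongrightarrow> 0 * (h \<bullet> xstar)"
      by (intro tendsto_intros inv_s_lim xs_lim)
    ultimately show ?thesis using LIMSEQ_unique by fastforce
  qed
  then have "adjoint (g' xbar) \<eta> \<bullet> adjoint (g' xbar) \<eta> = 0"
    by (simp add: adjoint_works[OF linear_blinfun_apply])
  then show "adjoint (g' xbar) \<eta> = 0" by simp
  have "(\<lambda>k. norm (\<nu> k)) \<longlonglongrightarrow> norm \<eta>" by (intro tendsto_intros \<nu>_lim)
  then have "(\<lambda>k. 1::real) \<longlonglongrightarrow> norm \<eta>"
    using \<nu>_norm_eventually by (rule Lim_transform_eventually)
  then show "norm \<eta> = 1" using LIMSEQ_unique[OF tendsto_const] by metis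
qed

lemma \<nu>_convergent_subseq: "\<exists>\<rho> \<eta>. strict_mono (\<rho> :: nat \<Rightarrow> nat) \<and> (\<lambda>n. \<nu> (\<rho> n)) \<longlonglongrightarrow> \<eta>"
proof -
  have "bounded (range \<nu>)" using \<nu>_norm_le by (intro boundedI) auto
  from bounded_imp_convergent_subsequence[OF this] show ?thesis by (auto simp: o_def)
qed

lemma asymptotic_sequence_subseq:
  assumes \<rho>: "strict_mono \<rho>"
  shows "asymptotic_sequence g g' g'' D xbar u (x \<circ> \<rho>) (y \<circ> \<rho>) (xs \<circ> \<rho>) (lam \<circ> \<rho>) xstar"
proof
  show "(\<lambda>k. (1 / norm ((x \<circ> \<rho>) k - xbar)) *\<^sub>R ((x \<circ> \<rho>) k - xbar)) \<longlonglongrightarrow> u"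
    using LIMSEQ_subseq_LIMSEQ[OF direction_lim \<rho>] by (simp add: o_def)
  show "(\<lambda>k. (1 / norm ((x \<circ> \<rho>) k - xbar)) *\<^sub>R (y \<circ> \<rho>) k) \<longlonglongrightarrow> 0"
    using LIMSEQ_subseq_LIMSEQ[OF y_rate \<rho>] by (simp add: o_def)
  show "(\<lambda>k. (1 / norm ((y \<circ> \<rho>) k)) *\<^sub>R (y \<circ> \<rho>) k - (1 / norm ((lam \<circ> \<rho>) k)) *\<^sub>R (lam \<circ> \<rho>) k)
      \<longlonglongrightarrow> 0"
    using LIMSEQ_subseq_LIMSEQ[OF aligned \<rho>] by (simp add: o_def)
  show "filterlim (\<lambda>k. norm ((lam \<circ> \<rho>) k)) at_top sequentially"
    using filterlim_compose[OF lam_unbounded filterlim_subseq[OF \<rho>]] by (simp add: o_def)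
qed (use g_deriv g'_deriv g''_cont normal x_ne y_ne LIMSEQ_subseq_LIMSEQ[OF x_lim \<rho>]
      LIMSEQ_subseq_LIMSEQ[OF xs_lim \<rho>] in auto)

lemma dir_lim_normal_of_common_normal:
  assumes l: "\<And>k. l \<in> reg_normal D (d k)"
  shows "(adjoint (g' xbar) l, - l) \<in> dir_lim_normal {(x, y). g x - y \<in> D} (xbar, 0) (u, 0)"
proof -
  define p where "p k = (v k, (1 / t k) *\<^sub>R y k)" for k
  define \<zeta> where "\<zeta> k = (adjoint (g' (x k)) l, - l)" for k
  have "p \<longlonglongrightarrow> (u, 0)"
    using y_rate unfolding p_def by (intro tendsto_Pair v_lim) (simp add: t_def[abs_def])
  moreover have "\<zeta> \<longlonglongrightarrow> (adjoint (g' xbar) l, - l)"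
    unfolding \<zeta>_def by (intro tendsto_Pair adjoint_g'_lim tendsto_const)
  moreover have "\<zeta> k \<in> reg_normal {(x, y). g x - y \<in> D} ((xbar, 0) + t k *\<^sub>R p k)" for k
  proof -
    have "(xbar, 0) + t k *\<^sub>R p k = (x k, y k)"
      using t_pos[of k] by (simp add: p_def x_eq)
    then show ?thesis
      using reg_normal_constraint_set[OF l[of k, unfolded d_def] g_deriv] by (simp add: \<zeta>_def)
  qed
  ultimately show ?thesis
    unfolding dir_lim_normal_def using t_pos t_lim
    by (intro CollectI exI[of _ t] exI[of _ p] exI[of _ \<zeta>]) blast
qed

lemma adjoint_lam_lim:
  assumes ts: "(\<lambda>k. t k * s k) \<longlonglongrightarrow> 0"
  shows "(\<lambda>k. adjoint (g' xbar) (lam k)) \<longlonglongrightarrow> xstar"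
proof -
  define Q where "Q k = (1 / t k) *\<^sub>R (g' (x k) - g' xbar)" for k
  have "(\<lambda>k. norm (Q k) * (t k * s k)) \<longlonglongrightarrow> norm (g'' xbar u) * 0"
    unfolding Q_def by (intro tendsto_intros g'_quotient_lim ts)
  then have bound_lim: "(\<lambda>k. norm (Q k) * (t k * s k)) \<longlonglongrightarrow> 0" by simp
  have "norm (adjoint (g' xbar) (lam k) - xs k) \<le> norm (Q k) * (t k * s k)" for k
  proof -
    have "norm (adjoint (g' xbar) (lam k) - xs k) \<le> norm (g' xbar - g' (x k)) * s k"
      using norm_adjoint_diff_le by (simp add: xs_eq s_def)
    also have "norm (g' xbar - g' (x k)) = t k * norm (Q k)"
      using t_pos[of k] by (simp add: Q_def norm_minus_commute)
    finally show ?thesis by (simp add: algebra_simps)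
  qed
  then have "\<forall>\<^sub>F k in sequentially. norm (adjoint (g' xbar) (lam k) - xs k) \<le> norm (Q k) * (t k * s k)"
    by (intro always_eventually allI)
  from Lim_null_comparison[OF this bound_lim]
  have "(\<lambda>k. adjoint (g' xbar) (lam k) - xs k) \<longlonglongrightarrow> 0" .
  from tendsto_add[OF this xs_lim] show ?thesis by simp
qed

lemma second_order_identity:
  assumes lw: "lam k \<bullet> w k = 0" and lu: "lam k \<bullet> g' xbar u = 0" and "s k > 0"
  shows "(lam k \<bullet> y k) / ((t k)\<^sup>2 * s k) =
     (xs k \<bullet> (v k - u)) / (t k * s k) + \<nu> k \<bullet> ((1 / t k) *\<^sub>R (g' (x k) - g' xbar)) u
     - (1/2) * (\<nu> k \<bullet> g'' xbar (v k) (v k)) + (\<nu> k \<bullet> taylor_rem k) / (t k)\<^sup>2"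
proof -
  define T where "T = t k"
  define G where "G = g' (x k) - g' xbar"
  have "T > 0" using t_pos by (simp add: T_def)
  have lam_eq: "lam k = s k *\<^sub>R \<nu> k" using \<open>s k > 0\<close> by (simp add: \<nu>_def)
  have h_eq: "x k - xbar = T *\<^sub>R v k" by (simp add: x_eq T_def)
  have "lam k \<bullet> y k = lam k \<bullet> (g (x k) - g xbar)"
    using d_eq[of k] lw by (simp add: d_def inner_diff_right algebra_simps)
  also have "\<dots> = lam k \<bullet> g' (x k) (x k - xbar) - (1/2) * (lam k \<bullet> g'' xbar (x k - xbar) (x k - xbar))
      + lam k \<bullet> taylor_rem k"
    by (simp add: taylor_rem_def inner_add_right inner_diff_right)
  also have "lam k \<bullet> g' (x k) (x k - xbar) = T * (xs k \<bullet> (v k - u)) + T * (lam k \<bullet> G u)"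
  proof -
    have "lam k \<bullet> g' (x k) (x k - xbar) = T * (xs k \<bullet> v k)"
      using adjoint_clauses(2)[OF linear_blinfun_apply[of "g' (x k)"], of "lam k" "x k - xbar"]
      by (simp add: xs_eq h_eq inner_commute)
    moreover have "xs k \<bullet> u = lam k \<bullet> G u"
      using adjoint_clauses(2)[OF linear_blinfun_apply[of "g' (x k)"], of "lam k" u] lu
      by (simp add: xs_eq G_def blinfun.diff_left inner_diff_right)
    ultimately show ?thesis by (simp add: inner_diff_right algebra_simps)
  qed
  also have "lam k \<bullet> g'' xbar (x k - xbar) (x k - xbar) = T\<^sup>2 * (lam k \<bullet> g'' xbar (v k) (v k))"
    by (simp add: h_eq blinfun.scaleR_left blinfun.scaleR_right power2_eq_square)
  finally have "lam k \<bullet> y k = T * (xs k \<bullet> (v k - u)) + T * (s k * (\<nu> k \<bullet> G u))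
      - (1/2) * (T\<^sup>2 * (s k * (\<nu> k \<bullet> g'' xbar (v k) (v k)))) + s k * (\<nu> k \<bullet> taylor_rem k)"
    by (simp add: lam_eq)
  moreover have "\<nu> k \<bullet> ((1 / t k) *\<^sub>R (g' (x k) - g' xbar)) u = (1 / T) * (\<nu> k \<bullet> G u)"
    by (simp add: T_def G_def blinfun.scaleR_left)
  ultimately show ?thesis
    using \<open>T > 0\<close> \<open>s k > 0\<close> unfolding T_def[symmetric] by (simp add: field_simps power2_eq_square)
qed

lemma first_order_term_lim:
  assumes "\<epsilon> > 0" and ts: "\<And>k. \<epsilon> \<le> t k * s k"
  shows "(\<lambda>k. (xs k \<bullet> (v k - u)) / (t k * s k)) \<longlonglongrightarrow> 0"
proof -
  have "(\<lambda>k. norm (xs k) * norm (v k - u) / \<epsilon>) \<longlonglongrightarrow> norm xstar * norm (u - u) / \<epsilon>"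
    by (intro tendsto_intros xs_lim v_lim) (use \<open>\<epsilon> > 0\<close> in simp)
  then have bound_lim: "(\<lambda>k. norm (xs k) * norm (v k - u) / \<epsilon>) \<longlonglongrightarrow> 0" by simp
  have "norm ((xs k \<bullet> (v k - u)) / (t k * s k)) \<le> norm (xs k) * norm (v k - u) / \<epsilon>" for k
  proof -
    have "norm ((xs k \<bullet> (v k - u)) / (t k * s k)) \<le> norm (xs k) * norm (v k - u) / (t k * s k)"
      using ts[of k] \<open>\<epsilon> > 0\<close> Cauchy_Schwarz_ineq2[of "xs k" "v k - u"]
      by (simp add: abs_divide divide_right_mono)
    also have "\<dots> \<le> norm (xs k) * norm (v k - u) / \<epsilon>"
      using ts[of k] \<open>\<epsilon> > 0\<close> by (intro divide_left_mono) auto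
    finally show ?thesis .
  qed
  then have "\<forall>\<^sub>F k in sequentially.
      norm ((xs k \<bullet> (v k - u)) / (t k * s k)) \<le> norm (xs k) * norm (v k - u) / \<epsilon>"
    by (intro always_eventually allI)
  from Lim_null_comparison[OF this bound_lim] show ?thesis .
qed

lemma remainder_term_lim: "(\<lambda>k. (\<nu> k \<bullet> taylor_rem k) / (t k)\<^sup>2) \<longlonglongrightarrow> 0"
proof -
  have "norm ((\<nu> k \<bullet> taylor_rem k) / (t k)\<^sup>2) \<le> norm (taylor_rem k) / (t k)\<^sup>2" for k
    using Cauchy_Schwarz_ineq2[of "\<nu> k" "taylor_rem k"] mult_right_mono[OF \<nu>_norm_le[of k], of "norm (taylor_rem k)"]
    by (simp add: abs_divide divide_right_mono)
  then have "\<forall>\<^sub>F k in sequentially. norm ((\<nu> k \<bullet> taylor_rem k) / (t k)\<^sup>2) \<le> norm (taylor_rem k) / (t k)\<^sup>2"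
    by (intro always_eventually allI)
  from Lim_null_comparison[OF this taylor_rem_lim] show ?thesis .
qed

text \<open>Polyhedrality makes \<open>lam k\<close> orthogonal to \<open>w k\<close> and to \<open>g' xbar u\<close>; then the second-order
  expansion of \<open>lam k \<bullet> y k \<ge> 0\<close> yields \<open>\<eta> \<bullet> g'' xbar u u \<ge> 0\<close> in the limit.\<close>

lemma second_order_nonneg:
  assumes "polyhedral_near D (g xbar) r F C"
    and "\<epsilon> > 0" and ts: "\<And>k. \<epsilon> \<le> t k * s k" and \<nu>_lim: "\<nu> \<longlonglongrightarrow> \<eta>"
  shows "0 \<le> \<eta> \<bullet> g'' xbar u u"
proof -
  define T where "T k = (xs k \<bullet> (v k - u)) / (t k * s k)
    + \<nu> k \<bullet> ((1 / t k) *\<^sub>R (g' (x k) - g' xbar)) u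
    - (1/2) * (\<nu> k \<bullet> g'' xbar (v k) (v k)) + (\<nu> k \<bullet> taylor_rem k) / (t k)\<^sup>2" for k
  have "\<forall>\<^sub>F k in sequentially. lam k \<bullet> w k = 0 \<and> lam k \<bullet> g' xbar u = 0"
    using d_mem lam_normal unfolding d_eq
    by (intro polyhedral_near.eventually_normal_orthogonal[OF assms(1) _ t_pos t_lim w_lim])
  then have "\<forall>\<^sub>F k in sequentially. 0 \<le> T k"
    using s_pos_eventually lam_inner_y_nonneg
  proof eventually_elim
    case (elim k)
    then have "0 \<le> (lam k \<bullet> y k) / ((t k)\<^sup>2 * s k)" using t_pos[of k] by simp
    then show ?case using second_order_identity[of k] elim by (simp add: T_def)
  qed
  moreover have "T \<longlonglongrightarrow> 0 + \<eta> \<bullet> g'' xbar u u - (1/2) * (\<eta> \<bullet> g'' xbar u u) + 0"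
    unfolding T_def[abs_def]
  proof (intro tendsto_add tendsto_diff first_order_term_lim[OF \<open>\<epsilon> > 0\<close> ts] remainder_term_lim)
    have "(\<lambda>k. ((1 / t k) *\<^sub>R (g' (x k) - g' xbar)) u) \<longlonglongrightarrow> g'' xbar u u"
      by (rule bounded_bilinear.tendsto[OF bounded_bilinear_blinfun_apply g'_quotient_lim tendsto_const])
    with \<nu>_lim show "(\<lambda>k. \<nu> k \<bullet> ((1 / t k) *\<^sub>R (g' (x k) - g' xbar)) u) \<longlonglongrightarrow> \<eta> \<bullet> g'' xbar u u"
      by (rule tendsto_inner)
    show "(\<lambda>k. (1/2) * (\<nu> k \<bullet> g'' xbar (v k) (v k))) \<longlonglongrightarrow> (1/2) * (\<eta> \<bullet> g'' xbar u u)"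
      by (intro tendsto_intros \<nu>_lim v_lim)
  qed
  ultimately have "0 \<le> (1/2) * (\<eta> \<bullet> g'' xbar u u)"
    by (intro tendsto_lowerbound[OF _ _ trivial_limit_sequentially]) simp_all
  then show ?thesis by simp
qed

lemma subseq_simps:
  assumes "strict_mono \<rho>"
  shows "asymptotic_sequence.t xbar (x \<circ> \<rho>) = t \<circ> \<rho>"
    and "asymptotic_sequence.s (lam \<circ> \<rho>) = s \<circ> \<rho>"
    and "asymptotic_sequence.\<nu> (lam \<circ> \<rho>) = \<nu> \<circ> \<rho>"
    and "asymptotic_sequence.d g (x \<circ> \<rho>) (y \<circ> \<rho>) = d \<circ> \<rho>"
proof -
  interpret sub: asymptotic_sequence g g' g'' D xbar u "x \<circ> \<rho>" "y \<circ> \<rho>" "xs \<circ> \<rho>" "lam \<circ> \<rho>" xstar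
    using assms by (rule asymptotic_sequence_subseq)
  show "sub.t = t \<circ> \<rho>" "sub.s = s \<circ> \<rho>" "sub.\<nu> = \<nu> \<circ> \<rho>" "sub.d = d \<circ> \<rho>"
    by (simp_all add: fun_eq_iff sub.t_def sub.s_def sub.\<nu>_def sub.d_def t_def s_def \<nu>_def d_def)
qed

lemma not_FOSCMS: "\<not> FOSCMS g g' D xbar u"
proof
  assume FOSCMS: "FOSCMS g g' D xbar u"
  obtain \<rho> :: "nat \<Rightarrow> nat" and \<eta> where \<rho>: "strict_mono \<rho>" and "(\<lambda>n. \<nu> (\<rho> n)) \<longlonglongrightarrow> \<eta>"
    using \<nu>_convergent_subseq by blast
  interpret sub: asymptotic_sequence g g' g'' D xbar u "x \<circ> \<rho>" "y \<circ> \<rho>" "xs \<circ> \<rho>" "lam \<circ> \<rho>" xstar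
    using \<rho> by (rule asymptotic_sequence_subseq)
  have "sub.\<nu> \<longlonglongrightarrow> \<eta>"
    using \<open>(\<lambda>n. \<nu> (\<rho> n)) \<longlonglongrightarrow> \<eta>\<close> unfolding subseq_simps(3)[OF \<rho>] by (simp add: o_def)
  from sub.\<nu>_limit[OF this] FOSCMS show False unfolding FOSCMS_def by auto
qed

lemma not_SOSCMS:
  assumes "polyhedral_near D (g xbar) r F C" and "\<not> (\<lambda>k. t k * s k) \<longlonglongrightarrow> 0"
  shows "\<not> SOSCMS g g' g'' D xbar u"
proof
  assume SOSCMS: "SOSCMS g g' g'' D xbar u"
  obtain \<epsilon> where "\<epsilon> > 0" and "infinite {k. \<epsilon> \<le> t k * s k}"
  proof -
    obtain \<epsilon> where "\<epsilon> > 0" and "\<forall>N. \<exists>k\<ge>N. \<not> norm (t k * s k - 0) < \<epsilon>"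
      using assms(2) unfolding LIMSEQ_def by (auto simp: dist_norm)
    moreover have "norm (t k * s k - 0) = t k * s k" for k
      using t_pos[of k] by (simp add: s_def)
    ultimately have "infinite {k. \<epsilon> \<le> t k * s k}"
      unfolding infinite_nat_iff_unbounded_le by (auto simp: not_less)
    with \<open>\<epsilon> > 0\<close> show thesis by (rule that)
  qed
  then obtain \<rho>\<^sub>1 :: "nat \<Rightarrow> nat" where \<rho>\<^sub>1: "strict_mono \<rho>\<^sub>1" and big: "\<And>n. \<epsilon> \<le> t (\<rho>\<^sub>1 n) * s (\<rho>\<^sub>1 n)"
    using infinite_enumerate by blast
  interpret sub1: asymptotic_sequence g g' g'' D xbar u "x \<circ> \<rho>\<^sub>1" "y \<circ> \<rho>\<^sub>1" "xs \<circ> \<rho>\<^sub>1" "lam \<circ> \<rho>\<^sub>1" xstar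
    using \<rho>\<^sub>1 by (rule asymptotic_sequence_subseq)
  obtain \<rho>\<^sub>2 :: "nat \<Rightarrow> nat" and \<eta> where \<rho>\<^sub>2: "strict_mono \<rho>\<^sub>2" and "(\<lambda>n. sub1.\<nu> (\<rho>\<^sub>2 n)) \<longlonglongrightarrow> \<eta>"
    using sub1.\<nu>_convergent_subseq by blast
  define \<rho> where "\<rho> = \<rho>\<^sub>1 \<circ> \<rho>\<^sub>2"
  have \<rho>: "strict_mono \<rho>" unfolding \<rho>_def using \<rho>\<^sub>1 \<rho>\<^sub>2 by (rule strict_mono_o)
  interpret sub: asymptotic_sequence g g' g'' D xbar u "x \<circ> \<rho>" "y \<circ> \<rho>" "xs \<circ> \<rho>" "lam \<circ> \<rho>" xstar
    using \<rho> by (rule asymptotic_sequence_subseq)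
  have "sub.\<nu> \<longlonglongrightarrow> \<eta>"
    using \<open>(\<lambda>n. sub1.\<nu> (\<rho>\<^sub>2 n)) \<longlonglongrightarrow> \<eta>\<close>[unfolded subseq_simps(3)[OF \<rho>\<^sub>1]]
    unfolding subseq_simps(3)[OF \<rho>] by (simp add: \<rho>_def o_def)
  moreover have "\<epsilon> \<le> sub.t k * sub.s k" for k
    using big[of "\<rho>\<^sub>2 k"] unfolding subseq_simps(1,2)[OF \<rho>] by (simp add: \<rho>_def)
  ultimately have "0 \<le> \<eta> \<bullet> g'' xbar u u"
    using sub.second_order_nonneg[OF assms(1) \<open>\<epsilon> > 0\<close>] by blast
  with sub.\<nu>_limit[OF \<open>sub.\<nu> \<longlonglongrightarrow> \<eta>\<close>] SOSCMS show False unfolding SOSCMS_def by auto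
qed

lemma dir_lim_normal_exists_polyhedral:
  assumes "polyhedral_near D (g xbar) r F C" and ts: "(\<lambda>k. t k * s k) \<longlonglongrightarrow> 0"
  shows "\<exists>l. (xstar, - l) \<in> dir_lim_normal {(x, y). g x - y \<in> D} (xbar, 0) (u, 0)"
proof -
  have "linear (adjoint (g' xbar))"
    by (rule adjoint_linear[OF linear_blinfun_apply])
  then obtain l and \<rho> :: "nat \<Rightarrow> nat" where \<rho>: "strict_mono \<rho>"
    and l: "\<And>n. l \<in> reg_normal D (d (\<rho> n))" and "adjoint (g' xbar) l = xstar"
    using polyhedral_near.reg_normal_common_limit[OF assms(1) d_mem d_lim lam_normal _ adjoint_lam_lim[OF ts]]
    by blast
  interpret sub: asymptotic_sequence g g' g'' D xbar u "x \<circ> \<rho>" "y \<circ> \<rho>" "xs \<circ> \<rho>" "lam \<circ> \<rho>" xstar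
    using \<rho> by (rule asymptotic_sequence_subseq)
  have "l \<in> reg_normal D (sub.d k)" for k using l[of k] by (simp add: subseq_simps[OF \<rho>])
  from sub.dir_lim_normal_of_common_normal[OF this] \<open>adjoint (g' xbar) l = xstar\<close>
  show ?thesis by auto
qed

lemma dir_lim_normal_exists:
  assumes "FOSCMS g g' D xbar u \<or> (locally_polyhedral D (g xbar) \<and> SOSCMS g g' g'' D xbar u)"
  shows "\<exists>l. (xstar, - l) \<in> dir_lim_normal {(x, y). g x - y \<in> D} (xbar, 0) (u, 0)"
proof -
  from assms not_FOSCMS obtain r F C where near: "polyhedral_near D (g xbar) r F C"
    and "SOSCMS g g' g'' D xbar u"
    by (auto elim: locally_polyhedral_obtain)
  with not_SOSCMS have "(\<lambda>k. t k * s k) \<longlonglongrightarrow> 0" by blast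
  with near show ?thesis by (rule dir_lim_normal_exists_polyhedral)
qed

end

lemma strongly_asymp_regular_dirI:
  fixes g :: "'a::euclidean_space \<Rightarrow> 'b::euclidean_space"
    and g' :: "'a \<Rightarrow> 'a \<Rightarrow>\<^sub>L 'b" and g'' :: "'a \<Rightarrow> 'a \<Rightarrow>\<^sub>L 'a \<Rightarrow>\<^sub>L 'b"
  assumes "\<And>x. (g has_derivative g' x) (at x)" "\<And>x. (g' has_derivative g'' x) (at x)"
    and "isCont g'' xbar" and "g xbar \<in> D"
    and sequences: "\<And>x y xs lam xstar. asymptotic_sequence g g' g'' D xbar u x y xs lam xstar \<Longrightarrow>
      \<exists>l. (xstar, - l) \<in> dir_lim_normal {(x, y). g x - y \<in> D} (xbar, 0) (u, 0)"
  shows "strongly_asymp_regular_dir (\<lambda>x. {g x - d | d. d \<in> D}) xbar u"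
  unfolding strongly_asymp_regular_dir_def gph_eq_constraint_set reg_coderiv_def mem_Collect_eq
proof (intro allI impI, elim conjE)
  fix x y xs lam xstar ystar
  assume "\<forall>k. case (x k, y k) of (x, y) \<Rightarrow> g x - y \<in> D"
    and no_zero: "\<forall>k. \<nexists>d. 0 = g (x k) - d \<and> d \<in> D" and "\<forall>k. y k \<noteq> 0"
    and "\<forall>k. (xs k, - lam k) \<in> reg_normal {(x, y). g x - y \<in> D} (x k, y k)"
    and "x \<longlonglongrightarrow> xbar" "y \<longlonglongrightarrow> 0" "xs \<longlonglongrightarrow> xstar"
    and "(\<lambda>k. (1 / norm (x k - xbar)) *\<^sub>R (x k - xbar)) \<longlonglongrightarrow> u"
    and "(\<lambda>k. (1 / norm (x k - xbar)) *\<^sub>R y k) \<longlonglongrightarrow> 0"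
    and "(\<lambda>k. (norm (y k) / norm (x k - xbar)) *\<^sub>R lam k) \<longlonglongrightarrow> ystar"
    and "filterlim (\<lambda>k. norm (lam k)) at_top sequentially"
    and "(\<lambda>k. (1 / norm (y k)) *\<^sub>R y k - (1 / norm (lam k)) *\<^sub>R lam k) \<longlonglongrightarrow> 0"
  moreover have "x k \<noteq> xbar" for k
    using no_zero \<open>g xbar \<in> D\<close> by auto
  ultimately have "asymptotic_sequence g g' g'' D xbar u x y xs lam xstar"
    using assms(1-3) by unfold_locales auto
  then show "\<exists>l. (xstar, - l) \<in> dir_lim_normal {(x, y). g x - y \<in> D} (xbar, 0) (u, 0)"
    by (rule sequences)
qed

theorem corollary5p23:
  fixes g :: "'a::euclidean_space \<Rightarrow> 'b::euclidean_space"
    and g' :: "'a \<Rightarrow> 'a \<Rightarrow>\<^sub>L 'b"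
    and g'' :: "'a \<Rightarrow> 'a \<Rightarrow>\<^sub>L 'a \<Rightarrow>\<^sub>L 'b"
    and D :: "'b set" and xbar u :: 'a
  assumes d1: "\<And>x. (g has_derivative blinfun_apply (g' x)) (at x)"
    and d2: "\<And>x. (g' has_derivative blinfun_apply (g'' x)) (at x)"
    and c2: "continuous_on UNIV g''"
    and "closed D"
    and "(xbar, 0) \<in> gph (\<lambda>x. {g x - d | d. d \<in> D})"
    and "norm u = 1"
    and "FOSCMS g g' D xbar u \<or>
         (locally_polyhedral D (g xbar) \<and> SOSCMS g g' g'' D xbar u)"
  shows "strongly_asymp_regular_dir (\<lambda>x. {g x - d | d. d \<in> D}) xbar u"
proof (rule strongly_asymp_regular_dirI[OF d1 d2])
  show "isCont g'' xbar" using c2 by (simp add: continuous_on_eq_continuous_at)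
  show "g xbar \<in> D" using assms(5) by (simp add: gph_eq_constraint_set)
  fix x y xs lam xstar
  assume "asymptotic_sequence g g' g'' D xbar u x y xs lam xstar"
  then show "\<exists>l. (xstar, - l) \<in> dir_lim_normal {(x, y). g x - y \<in> D} (xbar, 0) (u, 0)"
    using assms(7) by (rule asymptotic_sequence.dir_lim_normal_exists)
qed

end
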